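(* There exists a constant $C'>0$ depending only on $\eta$ and $t$ such that, provided $c_I,c_A$ are sufficiently small depending only on $\eta$, the test $\psi=\psi_{\mathrm{bulk}}\vee\psi_1\vee\psi_2$ satisfies: (i) $\mathbb P_p(\psi=1)\le\eta/2$; (ii) for every $q\in[0,1]^N$ with $$\|p-q\|_t\ge C'\left(\sqrt{\frac{\|p_{\le I}\|_r}{n}}+\frac{\|p_{>I}\|_1^{\frac{2-t}{t}}}{n^{\frac{2t-2}{t}}}+\frac1n\right),$$ $\mathbb P_q(\psi=0)\le\eta/2$. Consequently $\rho^*\lesssim_{\eta,t}\sqrt{\|p_{\le I}\|_r/n}+\|p_{>I}\|_1^{(2-t)/t}/n^{(2t-2)/t}+1/n$.
   Context: Binomial model: $N\ge2$, $n\ge2$ even, $k=n/2$. For $q\in[0,1]^N$ one observes $X_1,\dots,X_n$ i.i.d. in $\{0,1\}^N$ with mutually independent coordinates $X_l(j)\sim\mathrm{Ber}(q_j)$; $\mathbb P_q$ is their joint law. Known $p\in[0,1]^N$ with $p_1\ge\dots\ge p_N$ and $\max_jp_j\le1/2$; $\eta\in(0,1)$; $t\in[1,2]$, $r=\frac{2t}{4-t}$, $b=\frac{4-2t}{4-t}$; $\|x\|_s=(\sum_j|x_j|^s)^{1/s}$; $x_{\le u}=(x_1,\dots,x_u,0,\dots,0)$, $x_{>u}=(0,\dots,0,x_{u+1},\dots,x_N)$. $I=\min\{J\in\{0,\dots,N\}:\sum_{i>J}p_i^2\le c_I/n^2\}$; $A=\max\{a\in\{1,\dots,I\}:p_a^{b/2}\ge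 c_A/(\sqrt n(\sum_{i\le I}p_i^r)^{1/4})\}$ with $\max\emptyset=-\infty$, $x_{\le-\infty}=0$, $x_{>-\infty}=x$; $c_I,c_A>0$ small constants depending only on $\eta$. $\bar c=4/\sqrt\eta$. $S=\sum_{l=1}^kX_l$, $S'=\sum_{l=k+1}^nX_l$, $N_j=\sum_{l=1}^nX_l(j)$. $T_{\mathrm{bulk}}=\sum_{i\le A}p_i^{-b}(S_i/k-p_i)(S'_i/k-p_i)$, $\psi_{\mathrm{bulk}}=\mathbf 1\{T_{\mathrm{bulk}}>\frac{\bar c}{n}(\sum_{i\le A}p_i^r)^{1/2}\}$; $T_1=\sum_{i>A}(N_i/n-p_i)$, $\psi_1=\mathbf 1\{|T_1|>\bar c\sqrt{\sum_{i>A}p_i/n}\}$; $\psi_2=\mathbf 1\{\exists j>A:N_j\ge2\}$. $\rho^*=\inf\{\rho>0:\inf_\psi[\mathbb P_p(\psi=1)+\sup_{q\in[0,1]^N:\|p-q\|_t\ge\rho}\mathbb P_q(\psi=0)]\le\eta\}$. *)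

theory Defs
  imports "HOL-Analysis.Analysis"
begin

text \<open>Real power with the convention x^0 = 1 (also for x = 0).\<close>
definition pw :: "real \<Rightarrow> real \<Rightarrow> real" where
  "pw x a = (if a = 0 then 1 else x powr a)"

definition lnorm_on :: "real \<Rightarrow> (nat \<Rightarrow> real) \<Rightarrow> nat set \<Rightarrow> real" where
  "lnorm_on s v S = (\<Sum>j\<in>S. \<bar>v j\<bar> powr s) powr (1 / s)"

definition r_of :: "real \<Rightarrow> real" where "r_of t = 2 * t / (4 - t)"
definition b_of :: "real \<Rightarrow> real" where "b_of t = (4 - 2 * t) / (4 - t)"

definition Ival :: "real \<Rightarrow> nat \<Rightarrow> nat \<Rightarrow> (nat \<Rightarrow> real) \<Rightarrow> nat" where
  "Ival cI n N p = (LEAST J. J \<le> N \<and> (\<Sum>i\<in>{J<..N}. (p i)\<^sup>2) \<le> cI / (real n)\<^sup>2)"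

text \<open>The index A; the value 0 encodes A = -infinity (then x_{<=A} = 0, x_{>A} = x).\<close>
definition Aval :: "real \<Rightarrow> real \<Rightarrow> nat \<Rightarrow> nat \<Rightarrow> (nat \<Rightarrow> real) \<Rightarrow> real \<Rightarrow> nat" where
  "Aval cI cA n N p t =
     (let I = Ival cI n N p;
          cond = (\<lambda>a. pw (p a) (b_of t / 2) \<ge>
                   cA / (sqrt (real n) * (\<Sum>i\<in>{1..I}. pw (p i) (r_of t)) powr (1/4)))
      in if (\<exists>a\<in>{1..I}. cond a) then Max {a\<in>{1..I}. cond a} else 0)"

text \<open>Observations: x l j = X_l(j) for l in {1..n}, j in {1..N}.\<close>
definition config_space :: "nat \<Rightarrow> nat \<Rightarrow> (nat \<Rightarrow> nat \<Rightarrow> bool) set" where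
  "config_space n N = PiE {1..n} (\<lambda>_. PiE {1..N} (\<lambda>_. (UNIV :: bool set)))"

definition weight :: "nat \<Rightarrow> nat \<Rightarrow> (nat \<Rightarrow> real) \<Rightarrow> (nat \<Rightarrow> nat \<Rightarrow> bool) \<Rightarrow> real" where
  "weight n N q x = (\<Prod>l\<in>{1..n}. \<Prod>j\<in>{1..N}. (if x l j then q j else 1 - q j))"

definition Prob :: "nat \<Rightarrow> nat \<Rightarrow> (nat \<Rightarrow> real) \<Rightarrow> ((nat \<Rightarrow> nat \<Rightarrow> bool) \<Rightarrow> bool) \<Rightarrow> real" where
  "Prob n N q E = (\<Sum>x\<in>{x \<in> config_space n N. E x}. weight n N q x)"

definition cnt :: "(nat \<Rightarrow> nat \<Rightarrow> bool) \<Rightarrow> nat set \<Rightarrow> nat \<Rightarrow> nat" where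
  "cnt x L j = card {l\<in>L. x l j}"

definition cbar :: "real \<Rightarrow> real" where "cbar eta = 4 / sqrt eta"

definition T_bulk :: "real \<Rightarrow> real \<Rightarrow> nat \<Rightarrow> nat \<Rightarrow> (nat \<Rightarrow> real) \<Rightarrow> real \<Rightarrow> (nat \<Rightarrow> nat \<Rightarrow> bool) \<Rightarrow> real" where
  "T_bulk cI cA n N p t x =
     (let A = Aval cI cA n N p t; k = n div 2 in
      \<Sum>i\<in>{1..A}. pw (p i) (- b_of t)
        * (real (cnt x {1..k} i) / real k - p i)
        * (real (cnt x {k+1..n} i) / real k - p i))"

definition psi_bulk :: "real \<Rightarrow> real \<Rightarrow> real \<Rightarrow> nat \<Rightarrow> nat \<Rightarrow> (nat \<Rightarrow> real) \<Rightarrow> real \<Rightarrow> (nat \<Rightarrow> nat \<Rightarrow> bool) \<Rightarrow> bool" where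
  "psi_bulk eta cI cA n N p t x =
     (T_bulk cI cA n N p t x >
        cbar eta / real n * sqrt (\<Sum>i\<in>{1..Aval cI cA n N p t}. pw (p i) (r_of t)))"

definition T1 :: "real \<Rightarrow> real \<Rightarrow> nat \<Rightarrow> nat \<Rightarrow> (nat \<Rightarrow> real) \<Rightarrow> real \<Rightarrow> (nat \<Rightarrow> nat \<Rightarrow> bool) \<Rightarrow> real" where
  "T1 cI cA n N p t x =
     (\<Sum>i\<in>{Aval cI cA n N p t<..N}. real (cnt x {1..n} i) / real n - p i)"

definition psi1 :: "real \<Rightarrow> real \<Rightarrow> real \<Rightarrow> nat \<Rightarrow> nat \<Rightarrow> (nat \<Rightarrow> real) \<Rightarrow> real \<Rightarrow> (nat \<Rightarrow> nat \<Rightarrow> bool) \<Rightarrow> bool" where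
  "psi1 eta cI cA n N p t x =
     (\<bar>T1 cI cA n N p t x\<bar> >
        cbar eta * sqrt ((\<Sum>i\<in>{Aval cI cA n N p t<..N}. p i) / real n))"

definition psi2 :: "real \<Rightarrow> real \<Rightarrow> nat \<Rightarrow> nat \<Rightarrow> (nat \<Rightarrow> real) \<Rightarrow> real \<Rightarrow> (nat \<Rightarrow> nat \<Rightarrow> bool) \<Rightarrow> bool" where
  "psi2 cI cA n N p t x = (\<exists>j\<in>{Aval cI cA n N p t<..N}. cnt x {1..n} j \<ge> 2)"

definition test :: "real \<Rightarrow> real \<Rightarrow> real \<Rightarrow> nat \<Rightarrow> nat \<Rightarrow> (nat \<Rightarrow> real) \<Rightarrow> real \<Rightarrow> (nat \<Rightarrow> nat \<Rightarrow> bool) \<Rightarrow> bool" where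
  "test eta cI cA n N p t x =
     (psi_bulk eta cI cA n N p t x \<or> psi1 eta cI cA n N p t x \<or> psi2 cI cA n N p t x)"

definition in_cube :: "nat \<Rightarrow> (nat \<Rightarrow> real) \<Rightarrow> bool" where
  "in_cube N q = (\<forall>j\<in>{1..N}. 0 \<le> q j \<and> q j \<le> 1)"

text \<open>Minimax separation rate; tests are arbitrary functions of the data.
  The condition "P_p(psi=1) + sup_q P_q(psi=0) <= eta" is written with the sup unfolded
  as a universal bound.\<close>
definition rho_star :: "nat \<Rightarrow> nat \<Rightarrow> (nat \<Rightarrow> real) \<Rightarrow> real \<Rightarrow> real \<Rightarrow> real" where
  "rho_star n N p t eta = Inf {\<rho>. \<rho> > 0 \<and>
     (\<exists>\<psi>. \<forall>q. in_cube N q \<and> lnorm_on t (\<lambda>j. p j - q j) {1..N} \<ge> \<rho> \<longrightarrow>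
        Prob n N p \<psi> + Prob n N q (\<lambda>x. \<not> \<psi> x) \<le> eta)}"

definition rate :: "real \<Rightarrow> nat \<Rightarrow> nat \<Rightarrow> (nat \<Rightarrow> real) \<Rightarrow> real \<Rightarrow> real" where
  "rate cI n N p t =
     (let I = Ival cI n N p in
       sqrt (lnorm_on (r_of t) p {1..I} / real n)
       + pw (\<Sum>i\<in>{I<..N}. p i) ((2 - t) / t) / real n powr ((2 * t - 2) / t)
       + 1 / real n)"

end

theory Submission
  imports Defs
begin

text \<open>Under \<open>P_q\<close> the \<open>n \<times> N\<close> observed bits are independent Bernoulli variables, so the
  mean and variance of every statistic of the test can be computed exactly, and all error
  probabilities follow from Markov's and Chebyshev's inequalities. For \<open>i \<le> A\<close> the weight
  \<open>p\<^sub>i\<^sup>-\<^sup>b\<close> of the split-sample statistic \<open>T_bulk\<close> is small enough for its variance to be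
  dominated by its signal, and Hoelder's inequality turns \<open>\<ell>\<^sub>t\<close> distance on these coordinates into
  that signal. The choice of \<open>A\<close> leaves so little \<open>\<ell>\<^sub>2\<close> and \<open>\<ell>\<^sub>t\<close> mass on \<open>(A, I]\<close> that these
  coordinates can be treated together with the tail \<open>i > I\<close>: if \<open>q\<close> is far from \<open>p\<close> there, then
  either \<open>q\<close> has large \<open>\<ell>\<^sub>2\<close> mass, which the collision test \<open>\<psi>\<^sub>2\<close> detects, or, by Hoelder's
  inequality again, \<open>q\<close> has much more mass than \<open>p\<close>, which the linear statistic \<open>T\<^sub>1\<close> detects.\<close>

section \<open>Expectations under the product Bernoulli law\<close>

definition expect :: "nat \<Rightarrow> nat \<Rightarrow> (nat \<Rightarrow> real) \<Rightarrow> ((nat \<Rightarrow> nat \<Rightarrow> bool) \<Rightarrow> real) \<Rightarrow> real" where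
  "expect n N q f = (\<Sum>x\<in>config_space n N. weight n N q x * f x)"

lemma finite_config_space: "finite (config_space n N)"
  unfolding config_space_def by (intro finite_PiE) auto

lemma expect_prod_factors:
  "expect n N q (\<lambda>x. \<Prod>l\<in>{1..n}. \<Prod>j\<in>{1..N}. h l j (x l j)) =
   (\<Prod>l\<in>{1..n}. \<Prod>j\<in>{1..N}. q j * h l j True + (1 - q j) * h l j False)"
proof -
  define g where "g l j b = (if b then q j else 1 - q j) * h l j b" for l j b
  have "expect n N q (\<lambda>x. \<Prod>l\<in>{1..n}. \<Prod>j\<in>{1..N}. h l j (x l j)) =
        (\<Sum>x\<in>config_space n N. \<Prod>l\<in>{1..n}. \<Prod>j\<in>{1..N}. g l j (x l j))"
    unfolding expect_def weight_def g_def by (simp add: prod.distrib)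
  also have "\<dots> = (\<Prod>l\<in>{1..n}. \<Sum>y\<in>PiE {1..N} (\<lambda>_. UNIV). \<Prod>j\<in>{1..N}. g l j (y j))"
    unfolding config_space_def
    by (rule prod_sum_PiE[symmetric, where f="\<lambda>l y. \<Prod>j\<in>{1..N}. g l j (y j)"]) (auto intro: finite_PiE)
  also have "\<dots> = (\<Prod>l\<in>{1..n}. \<Prod>j\<in>{1..N}. \<Sum>b\<in>UNIV. g l j b)"
    by (intro prod.cong refl, rule prod_sum_PiE[symmetric]) auto
  also have "\<dots> = (\<Prod>l\<in>{1..n}. \<Prod>j\<in>{1..N}. q j * h l j True + (1 - q j) * h l j False)"
    by (simp add: UNIV_bool g_def add.commute)
  finally show ?thesis .
qed

lemma expect_sum: "expect n N q (\<lambda>x. \<Sum>i\<in>S. f i x) = (\<Sum>i\<in>S. expect n N q (f i))"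
  unfolding expect_def by (simp add: sum_distrib_left sum.swap[of _ S])

lemma expect_add: "expect n N q (\<lambda>x. f x + g x) = expect n N q f + expect n N q g"
  unfolding expect_def by (simp add: distrib_left sum.distrib)

lemma expect_diff: "expect n N q (\<lambda>x. f x - g x) = expect n N q f - expect n N q g"
  unfolding expect_def by (simp add: right_diff_distrib sum_subtractf)

lemma expect_cmult: "expect n N q (\<lambda>x. c * f x) = c * expect n N q f"
  unfolding expect_def by (simp add: sum_distrib_left mult.left_commute)

lemma expect_cong:
  "(\<And>x. x \<in> config_space n N \<Longrightarrow> f x = g x) \<Longrightarrow> expect n N q f = expect n N q g"
  unfolding expect_def by (intro sum.cong) auto

lemma expect_const: "expect n N q (\<lambda>_. c) = c"
proof -
  have "expect n N q (\<lambda>_. 1) = 1"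
    using expect_prod_factors[of n N q "\<lambda>_ _ _. 1"] by simp
  then show ?thesis using expect_cmult[of n N q c "\<lambda>_. 1"] by simp
qed

lemma weight_nonneg: "in_cube N q \<Longrightarrow> weight n N q x \<ge> 0"
  unfolding weight_def in_cube_def by (intro prod_nonneg) auto

lemma expect_mono:
  assumes "in_cube N q" "\<And>x. x \<in> config_space n N \<Longrightarrow> f x \<le> g x"
  shows "expect n N q f \<le> expect n N q g"
  unfolding expect_def using assms weight_nonneg by (intro sum_mono mult_left_mono) auto

lemma expect_square_nonneg: "in_cube N q \<Longrightarrow> expect n N q (\<lambda>x. (g x)\<^sup>2) \<ge> 0"
  using expect_mono[of N q n "\<lambda>_. 0" "\<lambda>x. (g x)\<^sup>2"] by (simp add: expect_const)

definition cells :: "nat \<Rightarrow> nat \<Rightarrow> (nat \<times> nat) set" where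
  "cells n N = {1..n} \<times> {1..N}"

definition restr_cells :: "(nat \<times> nat) set \<Rightarrow> (nat \<Rightarrow> nat \<Rightarrow> bool) \<Rightarrow> nat \<times> nat \<Rightarrow> bool" where
  "restr_cells B x = restrict (\<lambda>c. x (fst c) (snd c)) B"

definition cells_prob :: "(nat \<Rightarrow> real) \<Rightarrow> (nat \<times> nat) set \<Rightarrow> (nat \<times> nat \<Rightarrow> bool) \<Rightarrow> real" where
  "cells_prob q B u = (\<Prod>c\<in>B. if u c then q (snd c) else 1 - q (snd c))"

definition cells_indicator :: "(nat \<times> nat) set \<Rightarrow> (nat \<times> nat \<Rightarrow> bool) \<Rightarrow> (nat \<Rightarrow> nat \<Rightarrow> bool) \<Rightarrow> real" where
  "cells_indicator B u x = (\<Prod>c\<in>B. of_bool (x (fst c) (snd c) = u c))"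

lemma finite_cells: "finite (cells n N)"
  unfolding cells_def by auto

lemma prod_if_disjoint:
  fixes a b :: "'a \<Rightarrow> real"
  assumes "finite C" "B \<subseteq> C" "B' \<subseteq> C" "B \<inter> B' = {}"
  shows "(\<Prod>c\<in>C. if c \<in> B then a c else if c \<in> B' then b c else 1) = prod a B * prod b B'"
proof -
  have "(\<Prod>c\<in>C. if c \<in> B then a c else if c \<in> B' then b c else 1) =
        (\<Prod>c\<in>C. (if c \<in> B then a c else 1) * (if c \<in> B' then b c else 1))"
    using assms(4) by (intro prod.cong) auto
  also have "\<dots> = prod a (C \<inter> B) * prod b (C \<inter> B')"
    by (simp add: prod.distrib prod.inter_restrict[OF assms(1)])
  finally show ?thesis using assms(2,3) by (simp add: Int_absorb1)
qed

lemma expect_cells_indicator_pair: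
  assumes "B \<subseteq> cells n N" "B' \<subseteq> cells n N" "B \<inter> B' = {}"
  shows "expect n N q (\<lambda>x. cells_indicator B u x * cells_indicator B' v x) = cells_prob q B u * cells_prob q B' v"
proof -
  define h where "h l j b = (if (l,j) \<in> B then of_bool (b = u (l,j)) else
      if (l,j) \<in> B' then of_bool (b = v (l,j)) else (1::real))" for l j b
  have prod_cells: "(\<Prod>l\<in>{1..n}. \<Prod>j\<in>{1..N}. f l j) = (\<Prod>c\<in>cells n N. f (fst c) (snd c))" for f :: "nat \<Rightarrow> nat \<Rightarrow> real"
    unfolding cells_def prod.cartesian_product by (simp add: case_prod_beta)
  have "(\<Prod>l\<in>{1..n}. \<Prod>j\<in>{1..N}. h l j (x l j)) = cells_indicator B u x * cells_indicator B' v x" for x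
    unfolding prod_cells cells_indicator_def
    by (subst prod_if_disjoint[OF finite_cells assms, symmetric]) (auto simp: h_def intro!: prod.cong)
  moreover have "(\<Prod>l\<in>{1..n}. \<Prod>j\<in>{1..N}. q j * h l j True + (1 - q j) * h l j False) =
      cells_prob q B u * cells_prob q B' v"
    unfolding prod_cells cells_prob_def
    by (subst prod_if_disjoint[OF finite_cells assms, symmetric]) (auto simp: h_def intro!: prod.cong)
  ultimately show ?thesis using expect_prod_factors[of n N q h] by simp
qed

lemma expect_cells_indicator: "B \<subseteq> cells n N \<Longrightarrow> expect n N q (cells_indicator B u) = cells_prob q B u"
  using expect_cells_indicator_pair[of B n N "{}" q u "\<lambda>_. True"]
  by (simp add: cells_indicator_def[abs_def] cells_prob_def)

lemma restr_cells_expand: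
  assumes "finite B"
  shows "F (restr_cells B x) = (\<Sum>u\<in>PiE B (\<lambda>_. UNIV). F u * cells_indicator B u x)"
proof -
  have ind: "cells_indicator B u x = of_bool (u = restr_cells B x)" if "u \<in> PiE B (\<lambda>_. UNIV)" for u
  proof (cases "u = restr_cells B x")
    case False
    have "\<exists>c\<in>B. u c \<noteq> x (fst c) (snd c)"
    proof (rule ccontr)
      assume "\<not> ?thesis"
      then have "u = restr_cells B x"
        using that unfolding restr_cells_def by (intro ext) (auto simp: PiE_def extensional_def)
      then show False using False by simp
    qed
    then show ?thesis unfolding cells_indicator_def using assms False by (auto intro: prod_zero)
  qed (simp add: cells_indicator_def restr_cells_def)
  have "restr_cells B x \<in> PiE B (\<lambda>_. UNIV)"
    unfolding restr_cells_def by simp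
  then show ?thesis by (simp add: ind sum.delta' finite_PiE assms cong: sum.cong)
qed

lemma expect_restr_cells:
  assumes "B \<subseteq> cells n N"
  shows "expect n N q (\<lambda>x. F (restr_cells B x)) = (\<Sum>u\<in>PiE B (\<lambda>_. UNIV). F u * cells_prob q B u)"
proof -
  have "finite B" using assms finite_cells finite_subset by blast
  then have "expect n N q (\<lambda>x. F (restr_cells B x)) =
      expect n N q (\<lambda>x. \<Sum>u\<in>PiE B (\<lambda>_. UNIV). F u * cells_indicator B u x)"
    by (intro expect_cong restr_cells_expand)
  also have "\<dots> = (\<Sum>u\<in>PiE B (\<lambda>_. UNIV). F u * cells_prob q B u)"
    by (simp add: expect_sum expect_cmult expect_cells_indicator[OF assms])
  finally show ?thesis .
qed

definition depends_on_cells :: "(nat \<times> nat) set \<Rightarrow> ((nat \<Rightarrow> nat \<Rightarrow> bool) \<Rightarrow> real) \<Rightarrow> bool" where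
  "depends_on_cells B f \<longleftrightarrow> (\<forall>x y. (\<forall>(l,j)\<in>B. x l j = y l j) \<longrightarrow> f x = f y)"

lemma depends_on_cells_restr_cells:
  assumes "depends_on_cells B f"
  obtains F where "\<And>x. f x = F (restr_cells B x)"
proof (rule that[of "\<lambda>u. f (\<lambda>l j. (l,j) \<in> B \<and> u (l,j))"])
  show "f x = f (\<lambda>l j. (l,j) \<in> B \<and> restr_cells B x (l,j))" for x
    by (rule assms[unfolded depends_on_cells_def, rule_format]) (auto simp: restr_cells_def)
qed

lemma expect_mult_indep:
  assumes "B \<subseteq> cells n N" "B' \<subseteq> cells n N" "B \<inter> B' = {}"
    and "depends_on_cells B f" "depends_on_cells B' g"
  shows "expect n N q (\<lambda>x. f x * g x) = expect n N q f * expect n N q g"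
proof -
  obtain F G where FG: "\<And>x. f x = F (restr_cells B x)" "\<And>x. g x = G (restr_cells B' x)"
    using depends_on_cells_restr_cells[OF assms(4)] depends_on_cells_restr_cells[OF assms(5)] by metis
  have fin: "finite B" "finite B'" using assms finite_cells finite_subset by blast+
  let ?U = "PiE B (\<lambda>_. UNIV)" and ?V = "PiE B' (\<lambda>_. UNIV)"
  have "expect n N q (\<lambda>x. f x * g x) = expect n N q (\<lambda>x. \<Sum>u\<in>?U. \<Sum>v\<in>?V.
      (F u * G v) * (cells_indicator B u x * cells_indicator B' v x))"
    unfolding FG restr_cells_expand[OF fin(1), of F] restr_cells_expand[OF fin(2), of G]
    by (simp add: sum_product mult_ac)
  also have "\<dots> = (\<Sum>u\<in>?U. \<Sum>v\<in>?V. (F u * G v) * (cells_prob q B u * cells_prob q B' v))"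
    by (simp add: expect_sum expect_cmult expect_cells_indicator_pair[OF assms(1-3)])
  also have "\<dots> = (\<Sum>u\<in>?U. F u * cells_prob q B u) * (\<Sum>v\<in>?V. G v * cells_prob q B' v)"
    by (simp add: sum_product mult_ac)
  finally show ?thesis
    unfolding FG expect_restr_cells[OF assms(1)] expect_restr_cells[OF assms(2)] .
qed

lemma expect_obs:
  assumes "l \<in> {1..n}" "j \<in> {1..N}"
  shows "expect n N q (\<lambda>x. of_bool (x l j)) = q j"
  using expect_cells_indicator[of "{(l,j)}" n N q "\<lambda>_. True"] assms
  by (simp add: cells_def cells_indicator_def[abs_def] cells_prob_def)

lemma expect_obs_pair:
  assumes "l \<in> {1..n}" "j \<in> {1..N}" "l' \<in> {1..n}" "j' \<in> {1..N}" "(l,j) \<noteq> (l',j')"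
  shows "expect n N q (\<lambda>x. of_bool (x l j) * of_bool (x l' j')) = q j * q j'"
  using expect_cells_indicator[of "{(l,j),(l',j')}" n N q "\<lambda>_. True"] assms
  by (simp add: cells_def cells_indicator_def[abs_def] cells_prob_def)

lemma cnt_eq_sum: "finite H \<Longrightarrow> real (cnt x H i) = (\<Sum>l\<in>H. of_bool (x l i))"
  unfolding cnt_def by (simp add: sum.If_cases[of H] Int_def)

lemma expect_cnt:
  assumes "H \<subseteq> {1..n}" "i \<in> {1..N}"
  shows "expect n N q (\<lambda>x. real (cnt x H i)) = real (card H) * q i"
proof -
  have "finite H" using assms finite_subset by blast
  then have "expect n N q (\<lambda>x. real (cnt x H i)) = (\<Sum>l\<in>H. expect n N q (\<lambda>x. of_bool (x l i)))"
    by (simp only: cnt_eq_sum expect_sum)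
  also have "\<dots> = (\<Sum>l\<in>H. q i)" using assms by (intro sum.cong refl expect_obs) auto
  finally show ?thesis by simp
qed

lemma expect_cnt_sq:
  assumes "H \<subseteq> {1..n}" "i \<in> {1..N}"
  shows "expect n N q (\<lambda>x. (real (cnt x H i))\<^sup>2) =
    real (card H) * q i + real (card H) * (real (card H) - 1) * (q i)\<^sup>2"
proof -
  have fin: "finite H" using assms finite_subset by blast
  have row: "(\<Sum>l'\<in>H. expect n N q (\<lambda>x. of_bool (x l i) * of_bool (x l' i))) = q i + (\<Sum>l'\<in>H - {l}. (q i)\<^sup>2)"
    if l: "l \<in> H" for l
  proof -
    have "(\<lambda>x. of_bool (x l i) * of_bool (x l i)) = (\<lambda>x. of_bool (x l i) :: real)"
      by auto
    then have "expect n N q (\<lambda>x. of_bool (x l i) * of_bool (x l i)) = q i"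
      using expect_obs[of l n i N q] l assms by auto
    moreover have "(\<Sum>l'\<in>H - {l}. expect n N q (\<lambda>x. of_bool (x l i) * of_bool (x l' i))) = (\<Sum>l'\<in>H - {l}. (q i)\<^sup>2)"
      using l assms by (intro sum.cong refl) (subst expect_obs_pair, auto simp: power2_eq_square)
    ultimately show ?thesis using l fin by (simp add: sum.remove)
  qed
  have "expect n N q (\<lambda>x. (real (cnt x H i))\<^sup>2) =
        (\<Sum>l\<in>H. \<Sum>l'\<in>H. expect n N q (\<lambda>x. of_bool (x l i) * of_bool (x l' i)))"
    by (simp add: cnt_eq_sum[OF fin] expect_sum power2_eq_square sum_product)
  also have "\<dots> = (\<Sum>l\<in>H. q i + (\<Sum>l'\<in>H - {l}. (q i)\<^sup>2))"
    by (intro sum.cong refl row)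
  also have "\<dots> = real (card H) * q i + real (card H) * (real (card H) - 1) * (q i)\<^sup>2"
  proof (cases "card H = 0")
    case False
    then have "real (card H - Suc 0) = real (card H) - 1" by (simp add: of_nat_diff)
    then show ?thesis using fin by (simp add: sum.distrib card_Diff_singleton_if algebra_simps)
  qed (use fin in simp)
  finally show ?thesis .
qed

definition freq_dev :: "nat set \<Rightarrow> real \<Rightarrow> nat \<Rightarrow> (nat \<Rightarrow> nat \<Rightarrow> bool) \<Rightarrow> real" where
  "freq_dev H c i x = real (cnt x H i) / real (card H) - c"

lemma freq_dev_cong:
  "(\<And>l. l \<in> H \<Longrightarrow> x l i = y l i) \<Longrightarrow> freq_dev H c i x = freq_dev H c i y"
proof -
  assume "\<And>l. l \<in> H \<Longrightarrow> x l i = y l i"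
  then have "{l\<in>H. x l i} = {l\<in>H. y l i}" by auto
  then show ?thesis unfolding freq_dev_def cnt_def by simp
qed

lemma expect_freq_dev:
  assumes "H \<subseteq> {1..n}" "H \<noteq> {}" "i \<in> {1..N}"
  shows "expect n N q (freq_dev H c i) = q i - c"
proof -
  have "card H > 0" using assms finite_subset by (auto simp: card_gt_0_iff)
  then show ?thesis
    using expect_cnt[OF assms(1,3), of q] expect_cmult[of n N q "1 / real (card H)" "\<lambda>x. real (cnt x H i)"]
    unfolding freq_dev_def by (simp add: expect_diff[where f="\<lambda>x. real (cnt x H i) / real (card H)"] expect_const)
qed

lemma expect_freq_dev_sq:
  assumes "H \<subseteq> {1..n}" "H \<noteq> {}" "i \<in> {1..N}"
  shows "expect n N q (\<lambda>x. (freq_dev H c i x)\<^sup>2) = (q i - c)\<^sup>2 + q i * (1 - q i) / real (card H)"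
proof -
  define h where "h = real (card H)"
  have h: "h > 0" unfolding h_def using assms finite_subset by (auto simp: card_gt_0_iff)
  have "(\<lambda>x. (freq_dev H c i x)\<^sup>2) =
      (\<lambda>x. (1/h^2) * (real (cnt x H i))\<^sup>2 - (2*c/h) * real (cnt x H i) + c^2)"
    unfolding freq_dev_def h_def[symmetric] using h by (intro ext) (simp add: power2_eq_square field_simps)
  then have "expect n N q (\<lambda>x. (freq_dev H c i x)\<^sup>2) =
      (1/h^2) * expect n N q (\<lambda>x. (real (cnt x H i))\<^sup>2) - (2*c/h) * expect n N q (\<lambda>x. real (cnt x H i)) + c^2"
    by (simp only: expect_add expect_diff expect_cmult expect_const)
  also have "\<dots> = (1/h^2) * (h * q i + h * (h - 1) * (q i)\<^sup>2) - (2*c/h) * (h * q i) + c^2"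
    using expect_cnt[OF assms(1,3), of q] expect_cnt_sq[OF assms(1,3), of q] unfolding h_def by simp
  also have "\<dots> = (q i - c)\<^sup>2 + q i * (1 - q i) / h"
    using h by (simp add: field_simps power2_eq_square)
  finally show ?thesis unfolding h_def .
qed

lemma expect_sq_dev_sum_uncorrelated:
  assumes fin: "finite J"
    and uncorr: "\<And>i j. i \<in> J \<Longrightarrow> j \<in> J \<Longrightarrow> i \<noteq> j \<Longrightarrow>
      expect n N q (\<lambda>x. X i x * X j x) = expect n N q (X i) * expect n N q (X j)"
  shows "expect n N q (\<lambda>x. ((\<Sum>i\<in>J. X i x) - (\<Sum>i\<in>J. expect n N q (X i)))\<^sup>2) =
         (\<Sum>i\<in>J. expect n N q (\<lambda>x. (X i x)\<^sup>2) - (expect n N q (X i))\<^sup>2)"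
proof -
  define m where "m = (\<Sum>i\<in>J. expect n N q (X i))"
  define v where "v i = expect n N q (\<lambda>x. (X i x)\<^sup>2) - (expect n N q (X i))\<^sup>2" for i
  have row: "(\<Sum>j\<in>J. expect n N q (\<lambda>x. X i x * X j x)) = v i + expect n N q (X i) * m" if i: "i \<in> J" for i
  proof -
    have "(\<Sum>j\<in>J-{i}. expect n N q (\<lambda>x. X i x * X j x)) = (\<Sum>j\<in>J-{i}. expect n N q (X i) * expect n N q (X j))"
      using i by (intro sum.cong refl uncorr) auto
    also have "\<dots> = expect n N q (X i) * (m - expect n N q (X i))"
      unfolding m_def using i fin by (simp add: sum_distrib_left[symmetric] sum_diff1)
    finally show ?thesis
      using i fin unfolding v_def by (simp add: sum.remove power2_eq_square algebra_simps)
  qed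
  have "expect n N q (\<lambda>x. (\<Sum>i\<in>J. X i x)\<^sup>2) = (\<Sum>i\<in>J. \<Sum>j\<in>J. expect n N q (\<lambda>x. X i x * X j x))"
    by (simp add: power2_eq_square sum_product expect_sum)
  also have "\<dots> = (\<Sum>i\<in>J. v i) + m * m"
    by (simp add: row sum.distrib sum_distrib_right[symmetric] m_def)
  finally have second: "expect n N q (\<lambda>x. (\<Sum>i\<in>J. X i x)\<^sup>2) = (\<Sum>i\<in>J. v i) + m * m" .
  have "(\<lambda>x. ((\<Sum>i\<in>J. X i x) - m)\<^sup>2) = (\<lambda>x. (\<Sum>i\<in>J. X i x)\<^sup>2 - 2 * m * (\<Sum>i\<in>J. X i x) + m * m)"
    by (intro ext) (simp add: power2_eq_square algebra_simps)
  then show ?thesis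
    using second unfolding m_def[symmetric] v_def[symmetric]
    by (simp add: expect_add expect_diff expect_cmult expect_const expect_sum m_def)
qed

lemma expect_freq_dev_halves:
  assumes "n = 2*k" "k \<ge> 1" "i \<in> {1..N}"
  shows "expect n N q (\<lambda>x. h (freq_dev {1..k} c i x) * g (freq_dev {k+1..n} c i x)) =
      expect n N q (\<lambda>x. h (freq_dev {1..k} c i x)) * expect n N q (\<lambda>x. g (freq_dev {k+1..n} c i x))"
proof (rule expect_mult_indep[of "{1..k} \<times> {i}" n N "{k+1..n} \<times> {i}"])
  show "depends_on_cells ({1..k} \<times> {i}) (\<lambda>x. h (freq_dev {1..k} c i x))"
    "depends_on_cells ({k+1..n} \<times> {i}) (\<lambda>x. g (freq_dev {k+1..n} c i x))"
    unfolding depends_on_cells_def by (auto intro!: arg_cong[where f=h] arg_cong[where f=g] freq_dev_cong)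
qed (use assms in \<open>auto simp: cells_def\<close>)

lemma expect_split_product:
  assumes nk: "n = 2*k" "k \<ge> 1" and i: "i \<in> {1..N}"
  shows "expect n N q (\<lambda>x. w * freq_dev {1..k} c i x * freq_dev {k+1..n} c i x) = w * (q i - c)\<^sup>2"
  using expect_freq_dev_halves[OF nk i, of q "\<lambda>u. w * u" c "\<lambda>u. u"]
    expect_freq_dev[of "{1..k}" n i N q c] expect_freq_dev[of "{k+1..n}" n i N q c] nk i
  by (simp add: expect_cmult power2_eq_square)

lemma expect_split_product_sq:
  assumes nk: "n = 2*k" "k \<ge> 1" and i: "i \<in> {1..N}"
  shows "expect n N q (\<lambda>x. (w * freq_dev {1..k} c i x * freq_dev {k+1..n} c i x)\<^sup>2) =
    w\<^sup>2 * (q i * (1 - q i) / k + (q i - c)\<^sup>2)\<^sup>2"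
proof -
  have H: "{1..k} \<subseteq> {1..n}" "{1..k} \<noteq> {}" "{k+1..n} \<subseteq> {1..n}" "{k+1..n} \<noteq> {}"
    and card_halves: "card {1..k} = k" "card {k+1..n} = k" using nk by auto
  have "expect n N q (\<lambda>x. (w * freq_dev {1..k} c i x * freq_dev {k+1..n} c i x)\<^sup>2) =
      expect n N q (\<lambda>x. w\<^sup>2 * (freq_dev {1..k} c i x)\<^sup>2) * expect n N q (\<lambda>x. (freq_dev {k+1..n} c i x)\<^sup>2)"
    using expect_freq_dev_halves[OF nk i, of q "\<lambda>u. w\<^sup>2 * u\<^sup>2" c "\<lambda>u. u\<^sup>2"]
    by (simp add: power_mult_distrib)
  also have "\<dots> = w\<^sup>2 * ((q i - c)\<^sup>2 + q i * (1 - q i) / real (card {1..k})) *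
      ((q i - c)\<^sup>2 + q i * (1 - q i) / real (card {k+1..n}))"
    by (simp only: expect_cmult expect_freq_dev_sq[OF H(1,2) i] expect_freq_dev_sq[OF H(3,4) i])
  also have "\<dots> = w\<^sup>2 * (q i * (1 - q i) / k + (q i - c)\<^sup>2)\<^sup>2"
    unfolding card_halves using nk by (simp add: power2_eq_square field_simps)
  finally show ?thesis .
qed

lemma split_sample_var:
  fixes w c :: "nat \<Rightarrow> real"
  assumes nk: "n = 2*k" "k \<ge> 1" and J: "J \<subseteq> {1..N}"
  defines "X \<equiv> \<lambda>i x. w i * freq_dev {1..k} (c i) i x * freq_dev {k+1..n} (c i) i x"
  shows "expect n N q (\<lambda>x. ((\<Sum>i\<in>J. X i x) - (\<Sum>i\<in>J. w i * (q i - c i)\<^sup>2))\<^sup>2) =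
         (\<Sum>i\<in>J. (w i)\<^sup>2 * ((q i * (1 - q i) / k + (q i - c i)\<^sup>2)\<^sup>2 - (q i - c i)^4))"
proof -
  have mean: "expect n N q (X i) = w i * (q i - c i)\<^sup>2" if "i \<in> J" for i
    using expect_split_product[OF nk] that J unfolding X_def by auto
  have uncorr: "expect n N q (\<lambda>x. X i x * X j x) = expect n N q (X i) * expect n N q (X j)"
    if "i \<in> J" "j \<in> J" "i \<noteq> j" for i j
  proof (rule expect_mult_indep[of "{1..n} \<times> {i}" n N "{1..n} \<times> {j}"])
    show "depends_on_cells ({1..n} \<times> {i}) (X i)" "depends_on_cells ({1..n} \<times> {j}) (X j)"
      using nk unfolding depends_on_cells_def X_def by (auto intro!: freq_dev_cong arg_cong2[where f="(*)"])
  qed (use that J in \<open>auto simp: cells_def\<close>)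
  have fin: "finite J" using J finite_subset by blast
  have "(\<Sum>i\<in>J. expect n N q (\<lambda>x. (X i x)\<^sup>2) - (expect n N q (X i))\<^sup>2) =
      (\<Sum>i\<in>J. (w i)\<^sup>2 * ((q i * (1 - q i) / k + (q i - c i)\<^sup>2)\<^sup>2 - (q i - c i)^4))"
  proof (rule sum.cong[OF refl])
    fix i assume i: "i \<in> J"
    then have "expect n N q (\<lambda>x. (X i x)\<^sup>2) = (w i)\<^sup>2 * (q i * (1 - q i) / k + (q i - c i)\<^sup>2)\<^sup>2"
      using expect_split_product_sq[OF nk] J unfolding X_def by auto
    then show "expect n N q (\<lambda>x. (X i x)\<^sup>2) - (expect n N q (X i))\<^sup>2 =
        (w i)\<^sup>2 * ((q i * (1 - q i) / k + (q i - c i)\<^sup>2)\<^sup>2 - (q i - c i)^4)"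
      by (simp only: mean[OF i]) (simp add: eval_nat_numeral algebra_simps)
  qed
  moreover have "(\<Sum>i\<in>J. expect n N q (X i)) = (\<Sum>i\<in>J. w i * (q i - c i)\<^sup>2)"
    by (rule sum.cong[OF refl mean])
  ultimately show ?thesis
    using expect_sq_dev_sum_uncorrelated[where X=X, OF fin uncorr] by simp
qed

lemma full_sample_var:
  assumes n: "n \<ge> 1" and J: "J \<subseteq> {1..N}"
  shows "expect n N q (\<lambda>x. ((\<Sum>i\<in>J. freq_dev {1..n} (c i) i x) - (\<Sum>i\<in>J. q i - c i))\<^sup>2) =
         (\<Sum>i\<in>J. q i * (1 - q i) / n)"
proof -
  have H: "{1..n} \<subseteq> {1..n}" "{1..n} \<noteq> {}" using n by auto
  have mean: "expect n N q (freq_dev {1..n} (c i) i) = q i - c i" if "i \<in> J" for i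
    using expect_freq_dev[OF H, of i N q] that J by auto
  have uncorr: "expect n N q (\<lambda>x. freq_dev {1..n} (c i) i x * freq_dev {1..n} (c j) j x) =
      expect n N q (freq_dev {1..n} (c i) i) * expect n N q (freq_dev {1..n} (c j) j)"
    if "i \<in> J" "j \<in> J" "i \<noteq> j" for i j
    by (rule expect_mult_indep[of "{1..n} \<times> {i}" n N "{1..n} \<times> {j}"])
       (use that J in \<open>auto simp: cells_def depends_on_cells_def intro!: freq_dev_cong\<close>)
  have fin: "finite J" using J finite_subset by blast
  have "(\<Sum>i\<in>J. expect n N q (\<lambda>x. (freq_dev {1..n} (c i) i x)\<^sup>2) - (expect n N q (freq_dev {1..n} (c i) i))\<^sup>2) =
      (\<Sum>i\<in>J. q i * (1 - q i) / n)"
  proof (rule sum.cong[OF refl])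
    fix i assume i: "i \<in> J"
    then have "i \<in> {1..N}" using J by auto
    then show "expect n N q (\<lambda>x. (freq_dev {1..n} (c i) i x)\<^sup>2) - (expect n N q (freq_dev {1..n} (c i) i))\<^sup>2 =
        q i * (1 - q i) / n"
      by (simp only: expect_freq_dev_sq[OF H] mean[OF i]) simp
  qed
  moreover have "(\<Sum>i\<in>J. expect n N q (freq_dev {1..n} (c i) i)) = (\<Sum>i\<in>J. q i - c i)"
    by (rule sum.cong[OF refl mean])
  ultimately show ?thesis
    using expect_sq_dev_sum_uncorrelated[where X="\<lambda>i. freq_dev {1..n} (c i) i", OF fin uncorr] by simp
qed

lemma Prob_eq_expect: "Prob n N q P = expect n N q (\<lambda>x. of_bool (P x))"
proof -
  have "Prob n N q P = (\<Sum>x\<in>config_space n N. if P x then weight n N q x else 0)"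
    unfolding Prob_def by (rule sum.inter_filter[OF finite_config_space])
  also have "\<dots> = expect n N q (\<lambda>x. of_bool (P x))"
    unfolding expect_def by (intro sum.cong) auto
  finally show ?thesis .
qed

lemma Prob_mono:
  assumes "in_cube N q" "\<And>x. x \<in> config_space n N \<Longrightarrow> P x \<Longrightarrow> Q x"
  shows "Prob n N q P \<le> Prob n N q Q"
  unfolding Prob_eq_expect using assms by (intro expect_mono) auto

lemma Prob_disj_le:
  assumes "in_cube N q"
  shows "Prob n N q (\<lambda>x. P x \<or> Q x) \<le> Prob n N q P + Prob n N q Q"
proof -
  have "Prob n N q (\<lambda>x. P x \<or> Q x) \<le> expect n N q (\<lambda>x. of_bool (P x) + of_bool (Q x))"
    unfolding Prob_eq_expect using assms by (intro expect_mono) auto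
  then show ?thesis by (simp add: expect_add Prob_eq_expect)
qed

lemma Prob_markov:
  assumes "in_cube N q" "a > 0" "\<And>x. x \<in> config_space n N \<Longrightarrow> f x \<ge> 0"
  shows "Prob n N q (\<lambda>x. f x \<ge> a) \<le> expect n N q f / a"
proof -
  have "Prob n N q (\<lambda>x. f x \<ge> a) \<le> expect n N q (\<lambda>x. (1/a) * f x)"
    unfolding Prob_eq_expect using assms by (intro expect_mono) auto
  then show ?thesis by (simp only: expect_cmult) simp
qed

lemma Prob_chebyshev:
  assumes "in_cube N q" "a > 0"
  shows "Prob n N q (\<lambda>x. \<bar>g x\<bar> \<ge> a) \<le> expect n N q (\<lambda>x. (g x)\<^sup>2) / a\<^sup>2"
proof -
  have "Prob n N q (\<lambda>x. \<bar>g x\<bar> \<ge> a) \<le> Prob n N q (\<lambda>x. (g x)\<^sup>2 \<ge> a\<^sup>2)"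
    using assms by (intro Prob_mono) (auto simp: abs_le_square_iff[symmetric])
  also have "\<dots> \<le> expect n N q (\<lambda>x. (g x)\<^sup>2) / a\<^sup>2"
    using assms by (intro Prob_markov) auto
  finally show ?thesis .
qed

lemma Prob_chebyshev_le:
  assumes "in_cube N q" "\<theta> > 0" "expect n N q (\<lambda>x. (g x - m)\<^sup>2) \<le> V"
  shows "Prob n N q (\<lambda>x. \<bar>g x - m\<bar> \<ge> \<theta>) \<le> V / \<theta>\<^sup>2"
proof -
  have "expect n N q (\<lambda>x. (g x - m)\<^sup>2) / \<theta>\<^sup>2 \<le> V / \<theta>\<^sup>2"
    using assms(3) by (simp add: divide_right_mono)
  then show ?thesis using Prob_chebyshev[OF assms(1,2), of n "\<lambda>x. g x - m"] by linarith
qed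

lemma Prob_neq_0_eq_0:
  assumes "in_cube N q" "expect n N q (\<lambda>x. (g x)\<^sup>2) = 0"
  shows "Prob n N q (\<lambda>x. g x \<noteq> 0) = 0"
proof -
  have nonneg: "\<And>x. x \<in> config_space n N \<Longrightarrow> weight n N q x * (g x)\<^sup>2 \<ge> 0"
    using weight_nonneg[OF assms(1)] by simp
  have "weight n N q x * (g x)\<^sup>2 = 0" if "x \<in> config_space n N" for x
    using assms(2) sum_nonneg_eq_0_iff[of "config_space n N" "\<lambda>x. weight n N q x * (g x)\<^sup>2",
        OF finite_config_space nonneg] that
    unfolding expect_def by blast
  then show ?thesis
    unfolding Prob_eq_expect expect_def by (intro sum.neutral) auto
qed

section \<open>Real inequalities\<close>

lemma power_powr: "(x::real) > 0 \<Longrightarrow> (x ^ m) powr e = x powr (real m * e)"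
  by (simp add: powr_realpow[symmetric] powr_powr)

lemma of_nat_le_power2: "real c \<le> (real c)\<^sup>2"
  by (cases c) (auto simp: power2_eq_square)

lemma sum_powr_Holder:
  fixes a b :: "'i \<Rightarrow> real"
  assumes fin: "finite F" and ab: "0 \<le> \<alpha>" "0 \<le> \<beta>" "\<alpha> + \<beta> = 1"
    and nonneg: "\<And>i. i \<in> F \<Longrightarrow> a i \<ge> 0" "\<And>i. i \<in> F \<Longrightarrow> b i \<ge> 0"
  shows "(\<Sum>i\<in>F. a i powr \<alpha> * b i powr \<beta>) \<le> (\<Sum>i\<in>F. a i) powr \<alpha> * (\<Sum>i\<in>F. b i) powr \<beta>"
proof -
  define SA where "SA = (\<Sum>i\<in>F. a i)"
  define SB where "SB = (\<Sum>i\<in>F. b i)"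
  have SA0: "SA \<ge> 0" "SB \<ge> 0" unfolding SA_def SB_def using nonneg by (auto intro: sum_nonneg)
  show ?thesis
  proof (cases "SA = 0 \<or> SB = 0")
    case True
    then have "(\<forall>i\<in>F. a i = 0) \<or> (\<forall>i\<in>F. b i = 0)"
      unfolding SA_def SB_def using sum_nonneg_eq_0_iff[OF fin] nonneg by metis
    then show ?thesis using SA0 unfolding SA_def[symmetric] SB_def[symmetric] by auto
  next
    case False
    then have pos: "SA > 0" "SB > 0" using SA0 by auto
    have Young: "(a i / SA) powr \<alpha> * (b i / SB) powr \<beta> \<le> \<alpha> * (a i / SA) + \<beta> * (b i / SB)" if "i \<in> F" for i
      using Youngs_inequality_0[of \<alpha> \<beta> "a i / SA" "b i / SB"] nonneg[OF that] pos ab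
      by (cases "a i = 0 \<or> b i = 0") auto
    have "(\<Sum>i\<in>F. a i powr \<alpha> * b i powr \<beta>) = SA powr \<alpha> * SB powr \<beta> * (\<Sum>i\<in>F. (a i / SA) powr \<alpha> * (b i / SB) powr \<beta>)"
      using pos nonneg by (simp add: sum_distrib_left powr_divide divide_simps cong: sum.cong)
    also have "(\<Sum>i\<in>F. (a i / SA) powr \<alpha> * (b i / SB) powr \<beta>) \<le> (\<Sum>i\<in>F. \<alpha> * (a i / SA) + \<beta> * (b i / SB))"
      by (intro sum_mono Young)
    also have "\<dots> = \<alpha> * ((\<Sum>i\<in>F. a i) / SA) + \<beta> * ((\<Sum>i\<in>F. b i) / SB)"
      by (simp add: sum.distrib sum_distrib_left sum_divide_distrib)
    also have "\<dots> = 1"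
      using pos ab unfolding SA_def[symmetric] SB_def[symmetric] by simp
    finally show ?thesis using pos unfolding SA_def SB_def by simp
  qed
qed

lemma powr_add_le_add_powr:
  fixes a b e :: real
  assumes "a \<ge> 0" "b \<ge> 0" "0 \<le> e" "e \<le> 1"
  shows "(a + b) powr e \<le> a powr e + b powr e"
proof (cases "a + b = 0")
  case False
  define s where "s = a + b"
  have s: "s > 0" unfolding s_def using assms False by simp
  have le_powr: "x \<le> x powr e" if "0 \<le> x" "x \<le> 1" for x :: real
    using powr_mono'[of e 1 x] that assms by (cases "x = 0") auto
  have "1 = a / s + b / s" using s unfolding s_def by (simp add: add_divide_distrib[symmetric])
  also have "\<dots> \<le> (a / s) powr e + (b / s) powr e"
    using assms s unfolding s_def by (intro add_mono le_powr) (auto simp: divide_simps)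
  also have "\<dots> = (a powr e + b powr e) / s powr e"
    by (simp add: powr_divide add_divide_distrib)
  finally show ?thesis using s unfolding s_def by (simp add: le_divide_eq)
qed simp

section \<open>The indices \<open>I\<close> and \<open>A\<close>\<close>

lemma pw_pos: "x > 0 \<Longrightarrow> pw x a = x powr a"
  unfolding pw_def by auto

locale test_setting =
  fixes N n k :: nat and p :: "nat \<Rightarrow> real" and t cI cA :: real
  assumes n_eq: "n = 2*k" and k_pos: "k \<ge> 1"
    and p_antimono: "\<And>i j. 1 \<le> i \<Longrightarrow> i \<le> j \<Longrightarrow> j \<le> N \<Longrightarrow> p j \<le> p i"
    and p_range: "\<And>j. j \<in> {1..N} \<Longrightarrow> 0 \<le> p j \<and> p j \<le> 1/2"
    and t_range: "1 \<le> t" "t \<le> 2"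
    and cI: "0 < cI" "cI \<le> 1" and cA: "0 < cA" "cA \<le> 1"
begin

definition "I = Ival cI n N p"
definition "A = Aval cI cA n N p t"
definition "r = r_of t"
definition "b = b_of t"
definition "S = (\<Sum>i\<in>{1..I}. pw (p i) r)"
definition "T = (\<Sum>i\<in>{I<..N}. p i)"
definition "heavy a \<longleftrightarrow> pw (p a) (b/2) \<ge> cA / (sqrt (real n) * S powr (1/4))"

lemma n_pos: "n \<ge> 2" "real n > 0"
  using n_eq k_pos by auto

lemma p_cube: "in_cube N p"
  unfolding in_cube_def using p_range by fastforce

lemma p_nonneg: "j \<in> {1..N} \<Longrightarrow> p j \<ge> 0"
  using p_range by auto

lemma I_le_N: "I \<le> N" and tail_sq_le: "(\<Sum>i\<in>{I<..N}. (p i)\<^sup>2) \<le> cI / (real n)\<^sup>2"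
proof -
  have "N \<le> N \<and> (\<Sum>i\<in>{N<..N}. (p i)\<^sup>2) \<le> cI / (real n)\<^sup>2" using cI by simp
  then have "I \<le> N \<and> (\<Sum>i\<in>{I<..N}. (p i)\<^sup>2) \<le> cI / (real n)\<^sup>2"
    unfolding I_def Ival_def by (rule LeastI)
  then show "I \<le> N" "(\<Sum>i\<in>{I<..N}. (p i)\<^sup>2) \<le> cI / (real n)\<^sup>2" by auto
qed

lemma tail_sq_from_I_gt:
  assumes "I \<ge> 1"
  shows "(p I)\<^sup>2 + (\<Sum>i\<in>{I<..N}. (p i)\<^sup>2) > cI / (real n)\<^sup>2"
proof (rule ccontr)
  have split: "{I-1<..N} = insert I {I<..N}" using assms I_le_N by auto
  assume "\<not> ?thesis"
  then have "I - 1 \<le> N \<and> (\<Sum>i\<in>{I-1<..N}. (p i)\<^sup>2) \<le> cI / (real n)\<^sup>2"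
    using I_le_N unfolding split by auto
  then have "I \<le> I - 1" unfolding I_def Ival_def by (rule Least_le)
  then show False using assms by simp
qed

lemma p_I_pos:
  assumes "I \<ge> 1"
  shows "p I > 0"
proof -
  have "(p I)\<^sup>2 > 0" using tail_sq_from_I_gt[OF assms] tail_sq_le by linarith
  then show ?thesis using p_nonneg[of I] assms I_le_N by (auto simp: less_le)
qed

lemma p_pos: "i \<in> {1..I} \<Longrightarrow> p i > 0"
  using p_antimono[of i I] I_le_N p_I_pos by fastforce

lemma b_nonneg: "b \<ge> 0"
  unfolding b_def b_of_def using t_range by auto

lemma r_plus_2b: "r + 2 * b = 2"
proof -
  have "r + 2 * b = (2*t + 2*(4-2*t))/(4-t)"
    unfolding r_def b_def r_of_def b_of_def by (simp add: add_divide_distrib[symmetric] algebra_simps)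
  also have "\<dots> = 2" using t_range by (simp add: field_simps)
  finally show ?thesis .
qed

lemma r_2_minus_t: "r * (2 - t) = b * t"
  unfolding r_def b_def r_of_def b_of_def using t_range by (simp add: field_simps)

lemma pw_r: "i \<in> {1..I} \<Longrightarrow> pw (p i) r = p i powr r"
  using p_pos pw_pos by blast

lemma S_eq: "S = (\<Sum>i\<in>{1..I}. p i powr r)"
  unfolding S_def by (simp add: pw_r)

lemma S_nonneg: "S \<ge> 0"
  unfolding S_eq by (intro sum_nonneg) simp

lemma S_pos: "I \<ge> 1 \<Longrightarrow> S > 0"
  unfolding S_eq using p_pos by (intro sum_pos) (auto simp: less_imp_neq[symmetric])

lemma p_powr_r_le_S: "i \<in> {1..I} \<Longrightarrow> p i powr r \<le> S"
  unfolding S_eq by (intro member_le_sum) auto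

lemma A_eq: "A = (if \<exists>a\<in>{1..I}. heavy a then Max {a\<in>{1..I}. heavy a} else 0)"
  unfolding A_def Aval_def heavy_def I_def S_def r_def b_def Let_def by simp

lemma A_le_I: "A \<le> I"
  unfolding A_eq by (auto intro!: Max.boundedI)

lemma A_le_N: "A \<le> N"
  using A_le_I I_le_N by simp

lemma heavy_A: "A \<ge> 1 \<Longrightarrow> heavy A \<and> A \<in> {1..I}"
proof -
  assume "A \<ge> 1"
  then have ex: "\<exists>a\<in>{1..I}. heavy a" unfolding A_eq by (auto split: if_splits)
  then have "Max {a\<in>{1..I}. heavy a} \<in> {a\<in>{1..I}. heavy a}" by (intro Max_in) auto
  then show ?thesis using ex unfolding A_eq by simp
qed

lemma not_heavy: "a \<in> {A<..I} \<Longrightarrow> \<not> heavy a"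
proof
  assume a: "a \<in> {A<..I}" and "heavy a"
  then have ex: "\<exists>a\<in>{1..I}. heavy a" by auto
  have "a \<le> Max {a\<in>{1..I}. heavy a}" using a \<open>heavy a\<close> by (intro Max_ge) auto
  then show False using a ex unfolding A_eq by auto
qed

lemma greaterThan_A_split: "{A<..N} = {A<..I} \<union> {I<..N}" "{A<..I} \<inter> {I<..N} = {}"
  using A_le_I I_le_N by auto

lemma sum_greaterThan_A:
  "(\<Sum>i\<in>{A<..N}. f i) = (\<Sum>i\<in>{A<..I}. f i) + (\<Sum>i\<in>{I<..N}. f i)"
  unfolding greaterThan_A_split(1) by (rule sum.union_disjoint) (use greaterThan_A_split(2) in auto)

end

section \<open>Mass of the coordinates beyond \<open>A\<close>\<close>

context test_setting
begin

lemma light_bound: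
  assumes a: "a \<in> {A<..I}"
  shows "p a powr (2*b) * (real n)\<^sup>2 * S < cA^4"
proof -
  have pa: "p a > 0" and Sp: "S > 0" using p_pos S_pos a by auto
  define y where "y = p a powr (b/2) * (sqrt (real n) * S powr (1/4))"
  have den: "sqrt (real n) * S powr (1/4) > 0" using Sp n_pos by simp
  have "p a powr (b/2) < cA / (sqrt (real n) * S powr (1/4))"
    using not_heavy[OF a] unfolding heavy_def pw_pos[OF pa] by simp
  then have "y < cA" unfolding y_def using den by (simp add: pos_less_divide_eq)
  then have "y^4 < cA^4" using pa by (intro power_strict_mono) (auto simp: y_def)
  moreover have "(sqrt (real n))^4 = (real n)\<^sup>2"
    by (metis numeral_Bit0 of_nat_0_le_iff power_add real_sqrt_pow2 power2_eq_square)
  then have "y^4 = p a powr (2*b) * (real n)\<^sup>2 * S"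
    unfolding y_def using pa Sp by (simp add: power_mult_distrib powr_power)
  ultimately show ?thesis by simp
qed

lemma sum_mid_powr_r_le_S: "(\<Sum>i\<in>{A<..I}. p i powr r) \<le> S"
  unfolding S_eq by (intro sum_mono2) auto

lemma mid_sq_le: "(\<Sum>i\<in>{A<..I}. (p i)\<^sup>2) \<le> cA^4 / (real n)\<^sup>2"
proof (cases "{A<..I} = {}")
  case False
  then have Sp: "S > 0" using S_pos by auto
  have each: "(p a)\<^sup>2 * ((real n)\<^sup>2 * S) \<le> cA^4 * p a powr r" if a: "a \<in> {A<..I}" for a
  proof -
    have pa: "p a > 0" using p_pos a by auto
    have "p a powr r * p a powr (2*b) = (p a)\<^sup>2"
      using pa r_plus_2b by (simp add: powr_add[symmetric] powr_numeral)
    then have "(p a)\<^sup>2 * ((real n)\<^sup>2 * S) = p a powr r * (p a powr (2*b) * (real n)\<^sup>2 * S)"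
      by (simp add: mult_ac)
    also have "\<dots> \<le> p a powr r * cA^4"
      using light_bound[OF a] by (intro mult_left_mono) auto
    finally show ?thesis by (simp add: mult_ac)
  qed
  have "(\<Sum>i\<in>{A<..I}. (p i)\<^sup>2) * ((real n)\<^sup>2 * S) \<le> (\<Sum>i\<in>{A<..I}. cA^4 * p i powr r)"
    unfolding sum_distrib_right by (intro sum_mono each)
  also have "\<dots> \<le> cA^4 * S"
    unfolding sum_distrib_left[symmetric] using sum_mid_powr_r_le_S by (intro mult_left_mono) auto
  finally show ?thesis using Sp n_pos by (simp add: field_simps)
qed simp

lemma mid_powr_t_le: "(\<Sum>i\<in>{A<..I}. p i powr t) \<le> cA powr t * S powr (1 - t/4) / real n powr (t/2)"
proof (cases "{A<..I} = {}")
  case False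
  then have Sp: "S > 0" using S_pos by auto
  define K where "K = real n powr (t/2) * S powr (t/4)"
  have K: "K > 0" unfolding K_def using Sp n_pos by simp
  have r_bt: "r + b * t / 2 = t"
  proof -
    have "2 * r - t * r = t * b" using r_2_minus_t by (simp add: algebra_simps)
    moreover have "t * r + 2 * (t * b) = 2 * t"
      using arg_cong[OF r_plus_2b, of "\<lambda>x. t * x"] by (simp add: algebra_simps)
    ultimately show ?thesis by (simp add: field_simps)
  qed
  have each: "p a powr t * K \<le> cA powr t * p a powr r" if a: "a \<in> {A<..I}" for a
  proof -
    have pa: "p a > 0" using p_pos a by auto
    have "(p a powr (2*b) * (real n)\<^sup>2 * S) powr (t/4) \<le> (cA^4) powr (t/4)"
      using light_bound[OF a] pa Sp t_range by (intro powr_mono2) auto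
    moreover have "(p a powr (2*b) * (real n)\<^sup>2 * S) powr (t/4) = p a powr (b*t/2) * K"
      unfolding K_def using pa Sp n_pos by (simp add: powr_mult powr_powr power_powr mult_ac)
    moreover have "(cA^4) powr (t/4) = cA powr t" using cA by (simp add: power_powr)
    ultimately have "p a powr (b*t/2) * K \<le> cA powr t" by simp
    then have "p a powr r * (p a powr (b*t/2) * K) \<le> p a powr r * cA powr t" by (intro mult_left_mono) auto
    moreover have "p a powr t = p a powr r * p a powr (b*t/2)" using r_bt by (simp add: powr_add[symmetric])
    ultimately show ?thesis by (simp add: mult_ac)
  qed
  have "(\<Sum>i\<in>{A<..I}. p i powr t) * K \<le> (\<Sum>i\<in>{A<..I}. cA powr t * p i powr r)"
    unfolding sum_distrib_right by (intro sum_mono each)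
  also have "\<dots> \<le> cA powr t * S"
    unfolding sum_distrib_left[symmetric] using sum_mid_powr_r_le_S by (intro mult_left_mono) auto
  also have "\<dots> = cA powr t * S powr (1 - t/4) / real n powr (t/2) * K"
    unfolding K_def using Sp n_pos by (simp add: powr_add[symmetric])
  finally show ?thesis using K by (rule mult_right_le_imp_le)
qed (use cA in simp)

lemma T_nonneg: "T \<ge> 0"
  unfolding T_def using p_nonneg I_le_N by (intro sum_nonneg) auto

lemma tail_powr_t_le: "(\<Sum>i\<in>{I<..N}. p i powr t) \<le> T powr (2-t) * real n powr (2-2*t)"
proof -
  have "(\<Sum>i\<in>{I<..N}. p i powr t) = (\<Sum>i\<in>{I<..N}. p i powr (2-t) * ((p i)\<^sup>2) powr (t-1))"
  proof (intro sum.cong refl)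
    fix i assume "i \<in> {I<..N}"
    then have "p i \<ge> 0" using p_nonneg by auto
    then show "p i powr t = p i powr (2-t) * ((p i)\<^sup>2) powr (t-1)"
      by (cases "p i = 0") (auto simp: power_powr powr_add[symmetric])
  qed
  also have "\<dots> \<le> (\<Sum>i\<in>{I<..N}. p i) powr (2-t) * (\<Sum>i\<in>{I<..N}. (p i)\<^sup>2) powr (t-1)"
    using t_range p_nonneg I_le_N by (intro sum_powr_Holder) auto
  also have "\<dots> \<le> T powr (2-t) * (1 / (real n)\<^sup>2) powr (t-1)"
  proof -
    have "cI / (real n)\<^sup>2 \<le> 1 / (real n)\<^sup>2" using cI by (intro divide_right_mono) auto
    then show ?thesis
      unfolding T_def[symmetric] using tail_sq_le t_range
      by (intro mult_left_mono powr_mono2) (auto intro: sum_nonneg)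
  qed
  also have "(1 / (real n)\<^sup>2) powr (t-1) = real n powr (2 - 2*t)"
    using n_pos by (simp add: powr_divide power_powr powr_minus_divide[symmetric] algebra_simps)
  finally show ?thesis .
qed

text \<open>\<open>I\<close> is chosen minimal, so either \<open>p\<^sub>I\<close> itself is of order at least \<open>1/n\<close>, or
  the tail mass \<open>T\<close> compensates; in both cases \<open>1/(n\<^sup>2 p\<^sub>I)\<close> is controlled.\<close>

lemma inv_sq_div_p_I_le:
  assumes I1: "I \<ge> 1"
  shows "(1 / (real n)\<^sup>2) / p I \<le> (2/cI) * (T + 1/real n)"
proof -
  have pI: "p I > 0" using p_I_pos[OF I1] .
  have nn: "real n > 0" using n_pos by simp
  have "(\<Sum>i\<in>{I<..N}. (p i)\<^sup>2) \<le> (\<Sum>i\<in>{I<..N}. p I * p i)"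
  proof (intro sum_mono)
    fix i assume "i \<in> {I<..N}"
    then have "p i \<le> p I" "p i \<ge> 0" using p_antimono[of I i] I1 p_nonneg by auto
    then show "(p i)\<^sup>2 \<le> p I * p i" by (simp add: power2_eq_square mult_right_mono)
  qed
  also have "\<dots> = p I * T" unfolding T_def by (simp add: sum_distrib_left)
  finally have key: "cI / (real n)\<^sup>2 < (p I)\<^sup>2 + p I * T"
    using tail_sq_from_I_gt[OF I1] by simp
  show ?thesis
  proof (cases "(p I)\<^sup>2 \<ge> cI / (2 * (real n)\<^sup>2)")
    case True
    have "(cI/2)\<^sup>2 \<le> cI / 2" using cI by (simp add: power2_eq_square mult_le_one)
    also have "\<dots> \<le> (p I * real n)\<^sup>2" using True nn by (simp add: power_mult_distrib field_simps)
    finally have "cI / 2 \<le> p I * real n" by (rule power2_le_imp_le) (use pI nn in simp)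
    then have "1 / (p I * real n) \<le> 2 / cI" using cI by (simp add: divide_simps mult.commute)
    then have "(1/real n) * (1 / (p I * real n)) \<le> (1/real n) * (2 / cI)"
      using nn by (intro mult_left_mono) auto
    then have "(1 / (real n)\<^sup>2) / p I \<le> (2/cI) * (1/real n)"
      by (simp add: power2_eq_square mult.commute)
    also have "\<dots> \<le> (2/cI) * (T + 1/real n)" using T_nonneg cI by (intro mult_left_mono) auto
    finally show ?thesis .
  next
    case False
    then have "cI / (2 * (real n)\<^sup>2) < p I * T" using key by (simp add: field_simps)
    then have "(cI / (2 * (real n)\<^sup>2)) / p I < T" using pI by (simp only: pos_divide_less_eq mult.commute)
    then have "(2/cI) * ((cI / (2 * (real n)\<^sup>2)) / p I) < (2/cI) * T"
      using cI by (intro mult_strict_left_mono) auto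
    moreover have "(1 / (real n)\<^sup>2) / p I = (2/cI) * ((cI / (2 * (real n)\<^sup>2)) / p I)" using cI by simp
    ultimately have "(1 / (real n)\<^sup>2) / p I < (2/cI) * T" by simp
    also have "\<dots> \<le> (2/cI) * (T + 1/real n)" using nn cI by (intro mult_left_mono) auto
    finally show ?thesis by simp
  qed
qed

lemma mid_mass_le: "(\<Sum>i\<in>{A<..I}. p i) \<le> (2/cI) * (T + 1/real n)"
proof (cases "{A<..I} = {}")
  case True then show ?thesis using cI T_nonneg n_pos by simp
next
  case False
  then have I1: "I \<ge> 1" by auto
  have pI: "p I > 0" using p_I_pos[OF I1] .
  have "(\<Sum>i\<in>{A<..I}. p i) \<le> (\<Sum>i\<in>{A<..I}. (p i)\<^sup>2 / p I)"
  proof (intro sum_mono)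
    fix i assume "i \<in> {A<..I}"
    then have "p I \<le> p i" using p_antimono[of i I] I_le_N by auto
    then show "p i \<le> (p i)\<^sup>2 / p I" using pI by (simp add: le_divide_eq power2_eq_square mult_left_mono)
  qed
  also have "\<dots> = (\<Sum>i\<in>{A<..I}. (p i)\<^sup>2) / p I" by (simp add: sum_divide_distrib)
  also have "\<dots> \<le> (1 / (real n)\<^sup>2) / p I"
  proof -
    have "cA^4 / (real n)\<^sup>2 \<le> 1 / (real n)\<^sup>2" using cA by (intro divide_right_mono) (auto simp: power_le_one)
    then show ?thesis using mid_sq_le pI by (intro divide_right_mono) auto
  qed
  also have "\<dots> \<le> (2/cI) * (T + 1/real n)" by (rule inv_sq_div_p_I_le[OF I1])
  finally show ?thesis .
qed

end

section \<open>The separation rate\<close>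

context test_setting
begin

definition "rho_bulk = sqrt (S powr (1/r) / real n)"
definition "rho_tail = pw T ((2-t)/t) / real n powr ((2*t-2)/t)"
definition "R = rho_bulk + rho_tail + 1 / real n"

lemma rate_eq: "rate cI n N p t = R"
proof -
  have "(\<Sum>j\<in>{1..I}. \<bar>p j\<bar> powr r) = S"
    unfolding S_eq using p_pos by (intro sum.cong refl) (simp add: less_imp_le)
  then show ?thesis
    unfolding rate_def R_def rho_bulk_def rho_tail_def lnorm_on_def Let_def
      I_def[symmetric] T_def[symmetric] r_def[symmetric]
    by simp
qed

lemma rho_bulk_nonneg: "rho_bulk \<ge> 0"
  unfolding rho_bulk_def using S_nonneg by simp

lemma rho_tail_nonneg: "rho_tail \<ge> 0"
  unfolding rho_tail_def pw_def using T_nonneg by simp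

lemma R_pos: "R > 0"
  unfolding R_def using rho_bulk_nonneg rho_tail_nonneg n_pos by (simp add: add_nonneg_pos)

lemma R_ge: "rho_bulk \<le> R" "rho_tail \<le> R" "1 / real n \<le> R"
  unfolding R_def using rho_bulk_nonneg rho_tail_nonneg n_pos by auto

lemma rho_bulk_powr_t: "rho_bulk powr t = S powr (1 - t/4) / real n powr (t/2)"
proof -
  have "rho_bulk = (S powr (1/r) / real n) powr (1/2)"
    unfolding rho_bulk_def using S_nonneg n_pos by (simp add: powr_half_sqrt)
  then have "rho_bulk powr t = S powr (t / (2*r)) / real n powr (t/2)"
    by (simp add: powr_powr powr_divide S_nonneg mult.commute)
  also have "t / (2*r) = 1 - t/4"
    unfolding r_def r_of_def using t_range by (simp add: field_simps)
  finally show ?thesis .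
qed

lemma tail_bound_le_rho_tail_powr_t: "T powr (2-t) * real n powr (2-2*t) \<le> rho_tail powr t"
proof (cases "t = 2")
  case True
  then have "rho_tail powr t = real n powr (2-2*t)"
    unfolding rho_tail_def pw_def using n_pos by (simp add: powr_minus_divide powr_numeral power2_eq_square)
  moreover have "T powr (2-t) \<le> 1" using True by (simp add: powr_def)
  ultimately show ?thesis by (simp add: mult_left_le_one_le)
next
  case False
  then have "rho_tail = T powr ((2-t)/t) / real n powr ((2*t-2)/t)"
    unfolding rho_tail_def pw_def using t_range by simp
  moreover have "(2-t)/t * t = 2-t" "(2*t-2)/t * t = 2*t-2" using t_range by auto
  ultimately have "rho_tail powr t = T powr (2-t) / real n powr (2*t-2)"
    by (simp only: powr_divide powr_powr)
  also have "real n powr (2*t-2) = inverse (real n powr (2-2*t))"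
    by (simp add: powr_minus[symmetric])
  finally show ?thesis by (simp add: divide_inverse)
qed

lemma tail_budget_le: "T powr (2-t) * real n powr (2 - 2*t) \<le> R powr t"
  using tail_bound_le_rho_tail_powr_t R_ge(2) rho_tail_nonneg t_range powr_mono2[of t rho_tail R]
  by linarith

lemma inv_n_budget_le: "(1 / real n) powr (2-t) * real n powr (2 - 2*t) \<le> R powr t"
proof -
  have "(1 / real n) powr (2-t) * real n powr (2 - 2*t) = (1 / real n) powr t"
    using n_pos by (simp add: powr_divide powr_diff[symmetric] powr_minus_divide)
  also have "\<dots> \<le> R powr t" using R_ge(3) n_pos t_range by (intro powr_mono2) auto
  finally show ?thesis .
qed

lemma light_powr_t_le: "(\<Sum>i\<in>{A<..N}. p i powr t) \<le> 2 * R powr t"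
proof -
  have "(\<Sum>i\<in>{A<..I}. p i powr t) \<le> rho_bulk powr t"
  proof -
    have "cA powr t \<le> 1" using cA t_range by (intro powr_le1) auto
    then have "cA powr t * S powr (1 - t/4) / real n powr (t/2) \<le> S powr (1 - t/4) / real n powr (t/2)"
      by (intro divide_right_mono mult_left_le_one_le) auto
    then show ?thesis using mid_powr_t_le unfolding rho_bulk_powr_t by linarith
  qed
  also have "\<dots> \<le> R powr t" using R_ge rho_bulk_nonneg t_range by (intro powr_mono2) auto
  finally have mid: "(\<Sum>i\<in>{A<..I}. p i powr t) \<le> R powr t" .
  have "(\<Sum>i\<in>{I<..N}. p i powr t) \<le> rho_tail powr t"
    using tail_powr_t_le tail_bound_le_rho_tail_powr_t by linarith
  also have "\<dots> \<le> R powr t" using R_ge rho_tail_nonneg t_range by (intro powr_mono2) auto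
  finally show ?thesis using mid sum_greaterThan_A[of "\<lambda>i. p i powr t"] by linarith
qed

lemma light_mass_le: "(\<Sum>i\<in>{A<..N}. p i) \<le> (2/cI + 1) * (T + 1/real n)"
proof -
  have "(\<Sum>i\<in>{A<..N}. p i) \<le> (2/cI) * (T + 1/real n) + (T + 1/real n)"
    using sum_greaterThan_A[of p] mid_mass_le n_pos unfolding T_def[symmetric]
    by (simp add: add_increasing2)
  then show ?thesis by (simp add: algebra_simps)
qed

definition "w i = pw (p i) (- b)"

lemma w_eq: "i \<in> {1..I} \<Longrightarrow> w i = p i powr (-b)"
  unfolding w_def using p_pos pw_pos by blast

lemma w_pos: "i \<in> {1..I} \<Longrightarrow> w i > 0"
  using w_eq[of i] p_pos[of i] by simp

lemma w_A_le:
  assumes "A \<ge> 1"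
  shows "w A \<le> real n * sqrt S / cA\<^sup>2"
proof -
  have AI: "A \<in> {1..I}" and "heavy A" using heavy_A[OF assms] by auto
  have pA: "p A > 0" and Sp: "S > 0" using p_pos[OF AI] S_pos AI by auto
  have den: "sqrt (real n) * S powr (1/4) > 0" using Sp n_pos by simp
  define y where "y = p A powr (b/2)"
  have "cA \<le> y * (sqrt (real n) * S powr (1/4))"
    using \<open>heavy A\<close> den unfolding heavy_def y_def pw_pos[OF pA] by (simp add: pos_divide_le_eq)
  then have "cA\<^sup>2 \<le> (y * (sqrt (real n) * S powr (1/4)))\<^sup>2"
    using cA by (intro power_mono) auto
  also have "\<dots> = p A powr b * (real n * sqrt S)"
    unfolding y_def using pA Sp n_pos
    by (simp add: power_mult_distrib powr_power powr_half_sqrt[symmetric] powr_powr)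
  finally have "cA\<^sup>2 \<le> p A powr b * (real n * sqrt S)" .
  then show ?thesis
    using pA cA unfolding w_eq[OF AI] by (simp add: powr_minus divide_simps mult.commute)
qed

lemma w_le:
  assumes i: "i \<in> {1..A}"
  shows "w i \<le> real n * sqrt S / cA\<^sup>2"
proof -
  have A1: "A \<ge> 1" and AI: "A \<in> {1..I}" and iI: "i \<in> {1..I}" using i heavy_A A_le_I by auto
  have pA: "p A > 0" using p_pos[OF AI] .
  have "p A \<le> p i" using p_antimono[of i A] i A_le_N by auto
  then have "p A powr b \<le> p i powr b" using pA b_nonneg by (intro powr_mono2) auto
  then have "w i \<le> w A"
    using pA unfolding w_eq[OF iI] w_eq[OF AI] by (simp add: powr_minus le_imp_inverse_le)
  also have "\<dots> \<le> real n * sqrt S / cA\<^sup>2" by (rule w_A_le[OF A1])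
  finally show ?thesis .
qed

lemma w_sq_mult_p_sq: "i \<in> {1..I} \<Longrightarrow> (w i)\<^sup>2 * (p i)\<^sup>2 = p i powr r"
proof -
  assume i: "i \<in> {1..I}"
  have pi: "p i > 0" using p_pos[OF i] .
  have "(w i)\<^sup>2 = p i powr (-2*b)" unfolding w_eq[OF i] using pi by (simp add: powr_power)
  moreover have "(p i)\<^sup>2 = p i powr 2" using pi by (simp add: powr_numeral)
  ultimately have "(w i)\<^sup>2 * (p i)\<^sup>2 = p i powr (-2*b + 2)" by (simp only: powr_add)
  also have "-2*b + 2 = r" using r_plus_2b by simp
  finally show ?thesis .
qed

lemma w_mult_p_le: "i \<in> {1..I} \<Longrightarrow> w i * p i \<le> sqrt S"
proof -
  assume i: "i \<in> {1..I}"
  have "(w i * p i)\<^sup>2 = p i powr r" using w_sq_mult_p_sq[OF i] by (simp add: power_mult_distrib)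
  moreover have "w i * p i \<ge> 0" using w_pos[OF i] p_pos[OF i] by simp
  ultimately have "w i * p i = sqrt (p i powr r)" by (metis real_sqrt_unique)
  also have "\<dots> \<le> sqrt S" using p_powr_r_le_S[OF i] by simp
  finally show ?thesis .
qed

end

section \<open>The test statistics and the type I error\<close>

lemma cbar_sq: "eta > 0 \<Longrightarrow> (cbar eta)\<^sup>2 = 16 / eta"
  unfolding cbar_def by (simp add: power_divide)

lemma cbar_pos: "eta > 0 \<Longrightarrow> cbar eta > 0"
  unfolding cbar_def by simp

context test_setting
begin

definition "S_A = (\<Sum>i\<in>{1..A}. p i powr r)"
definition "P_light = (\<Sum>i\<in>{A<..N}. p i)"
definition "bulk_signal q = (\<Sum>i\<in>{1..A}. w i * (q i - p i)\<^sup>2)"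

lemma T_bulk_eq:
  "T_bulk cI cA n N p t x = (\<Sum>i\<in>{1..A}. w i * freq_dev {1..k} (p i) i x * freq_dev {k+1..n} (p i) i x)"
proof -
  have "n div 2 = k" "card {1..k} = k" "card {k+1..n} = k" using n_eq by auto
  then show ?thesis
    unfolding T_bulk_def Let_def A_def[symmetric] b_def[symmetric] w_def freq_dev_def by simp
qed

lemma T1_eq: "T1 cI cA n N p t x = (\<Sum>i\<in>{A<..N}. freq_dev {1..n} (p i) i x)"
  unfolding T1_def A_def[symmetric] freq_dev_def by simp

lemma psi_bulk_iff: "psi_bulk eta cI cA n N p t x \<longleftrightarrow> T_bulk cI cA n N p t x > cbar eta / real n * sqrt S_A"
proof -
  have "(\<Sum>i\<in>{1..A}. pw (p i) r) = S_A"
    unfolding S_A_def using A_le_I by (intro sum.cong refl) (auto simp: pw_r)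
  then show ?thesis unfolding psi_bulk_def A_def[symmetric] r_def[symmetric] by simp
qed

lemma psi1_iff: "psi1 eta cI cA n N p t x \<longleftrightarrow> \<bar>T1 cI cA n N p t x\<bar> > cbar eta * sqrt (P_light / real n)"
  unfolding psi1_def P_light_def A_def ..

lemma psi2_iff: "psi2 cI cA n N p t x \<longleftrightarrow> (\<exists>j\<in>{A<..N}. cnt x {1..n} j \<ge> 2)"
  unfolding psi2_def A_def ..

lemma S_A_pos: "A \<ge> 1 \<Longrightarrow> S_A > 0"
  unfolding S_A_def using p_pos A_le_I by (intro sum_pos) (auto simp: less_imp_neq[symmetric])

lemma S_A_le_S: "S_A \<le> S"
  unfolding S_A_def S_eq using A_le_I by (intro sum_mono2) auto

lemma P_light_nonneg: "P_light \<ge> 0"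
  unfolding P_light_def using p_nonneg by (intro sum_nonneg) auto

lemma bulk_signal_nonneg: "bulk_signal q \<ge> 0"
  unfolding bulk_signal_def using w_pos A_le_I by (intro sum_nonneg) (auto simp: less_imp_le)

lemma T_bulk_var:
  "expect n N q (\<lambda>x. (T_bulk cI cA n N p t x - bulk_signal q)\<^sup>2) =
   (\<Sum>i\<in>{1..A}. (w i)\<^sup>2 * ((q i * (1 - q i) / k + (q i - p i)\<^sup>2)\<^sup>2 - (q i - p i)^4))"
  unfolding T_bulk_eq bulk_signal_def
  using split_sample_var[OF n_eq k_pos, where J="{1..A}" and N=N and w=w and c=p and q=q] A_le_N
  by auto

lemma T1_var:
  "expect n N q (\<lambda>x. (T1 cI cA n N p t x - (\<Sum>i\<in>{A<..N}. q i - p i))\<^sup>2) = (\<Sum>i\<in>{A<..N}. q i * (1 - q i) / n)"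
  unfolding T1_eq by (rule full_sample_var) (use n_pos in auto)

lemma T_bulk_null_var_le: "expect n N p (\<lambda>x. (T_bulk cI cA n N p t x - 0)\<^sup>2) \<le> S_A / (real k)\<^sup>2"
proof -
  have "expect n N p (\<lambda>x. (T_bulk cI cA n N p t x - 0)\<^sup>2) =
      (\<Sum>i\<in>{1..A}. (w i)\<^sup>2 * (p i * (1 - p i))\<^sup>2 / (real k)\<^sup>2)"
    using T_bulk_var[of p] unfolding bulk_signal_def by (simp add: power_divide)
  also have "\<dots> \<le> (\<Sum>i\<in>{1..A}. p i powr r / (real k)\<^sup>2)"
  proof (intro sum_mono divide_right_mono)
    fix i assume "i \<in> {1..A}"
    then have i: "i \<in> {1..I}" using A_le_I by auto
    then have "0 < p i" "p i \<le> 1/2" using p_pos p_range I_le_N by auto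
    then have "(w i)\<^sup>2 * (p i * (1 - p i))\<^sup>2 \<le> (w i)\<^sup>2 * (p i)\<^sup>2"
      by (intro mult_left_mono power_mono) (auto simp: mult_le_cancel_left1)
    then show "(w i)\<^sup>2 * (p i * (1 - p i))\<^sup>2 \<le> p i powr r" using w_sq_mult_p_sq[OF i] by simp
  qed simp
  finally show ?thesis unfolding S_A_def by (simp add: sum_divide_distrib)
qed

lemma typeI_bulk:
  assumes eta: "eta > 0"
  shows "Prob n N p (psi_bulk eta cI cA n N p t) \<le> eta / 4"
proof (cases "A = 0")
  case True
  then have "Prob n N p (psi_bulk eta cI cA n N p t) = 0"
    unfolding Prob_def by (simp add: psi_bulk_iff T_bulk_eq S_A_def)
  then show ?thesis using eta by simp
next
  case False
  have SA: "S_A > 0" using S_A_pos False by simp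
  define \<theta> where "\<theta> = cbar eta / real n * sqrt S_A"
  have th: "\<theta> > 0" unfolding \<theta>_def using SA cbar_pos[OF eta] n_pos by simp
  have "Prob n N p (psi_bulk eta cI cA n N p t) \<le> Prob n N p (\<lambda>x. \<bar>T_bulk cI cA n N p t x - 0\<bar> \<ge> \<theta>)"
    using p_cube by (intro Prob_mono) (auto simp: psi_bulk_iff \<theta>_def)
  also have "\<dots> \<le> (S_A / (real k)\<^sup>2) / \<theta>\<^sup>2"
    by (rule Prob_chebyshev_le[OF p_cube th T_bulk_null_var_le])
  also have "\<theta>\<^sup>2 = 16 / eta / (real n)\<^sup>2 * S_A"
    unfolding \<theta>_def using SA by (simp add: power_mult_distrib power_divide cbar_sq[OF eta])
  also have "(S_A / (real k)\<^sup>2) / (16 / eta / (real n)\<^sup>2 * S_A) = eta / 4"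
    using SA eta n_pos n_eq by (simp add: field_simps power2_eq_square)
  finally show ?thesis .
qed

lemma typeI_psi1:
  assumes eta: "eta > 0"
  shows "Prob n N p (psi1 eta cI cA n N p t) \<le> eta / 16"
proof -
  have var: "expect n N p (\<lambda>x. (T1 cI cA n N p t x - 0)\<^sup>2) \<le> P_light / real n"
  proof -
    have "expect n N p (\<lambda>x. (T1 cI cA n N p t x - 0)\<^sup>2) = (\<Sum>i\<in>{A<..N}. p i * (1 - p i) / n)"
      using T1_var[of p] by simp
    also have "\<dots> \<le> (\<Sum>i\<in>{A<..N}. p i / n)"
      using p_range by (intro sum_mono divide_right_mono) (auto simp: mult_left_le)
    finally show ?thesis unfolding P_light_def by (simp add: sum_divide_distrib)
  qed
  show ?thesis
  proof (cases "P_light = 0")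
    case True
    have "expect n N p (\<lambda>x. (T1 cI cA n N p t x - 0)\<^sup>2) = 0"
      using var True expect_square_nonneg[OF p_cube, of n "\<lambda>x. T1 cI cA n N p t x - 0"] by simp
    then have "Prob n N p (\<lambda>x. T1 cI cA n N p t x - 0 \<noteq> 0) = 0"
      by (rule Prob_neq_0_eq_0[OF p_cube])
    moreover have "Prob n N p (psi1 eta cI cA n N p t) \<le> Prob n N p (\<lambda>x. T1 cI cA n N p t x - 0 \<noteq> 0)"
      using p_cube by (intro Prob_mono) (auto simp: psi1_iff True)
    ultimately show ?thesis using eta by simp
  next
    case False
    then have PL: "P_light > 0" using P_light_nonneg by simp
    define \<theta> where "\<theta> = cbar eta * sqrt (P_light / real n)"
    have th: "\<theta> > 0" unfolding \<theta>_def using PL n_pos cbar_pos[OF eta] by simp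
    have "Prob n N p (psi1 eta cI cA n N p t) \<le> Prob n N p (\<lambda>x. \<bar>T1 cI cA n N p t x - 0\<bar> \<ge> \<theta>)"
      using p_cube by (intro Prob_mono) (auto simp: psi1_iff \<theta>_def)
    also have "\<dots> \<le> (P_light / real n) / \<theta>\<^sup>2"
      by (rule Prob_chebyshev_le[OF p_cube th var])
    also have "\<dots> = eta / 16"
      unfolding \<theta>_def using PL n_pos eta by (simp add: power_mult_distrib cbar_sq)
    finally show ?thesis .
  qed
qed

text \<open>\<open>c\<^sup>2 - c\<close> is the number of ordered pairs of distinct samples that share coordinate \<open>j\<close>,
  where \<open>c\<close> is its count.\<close>

definition "pair_count x = (\<Sum>j\<in>{A<..N}. (real (cnt x {1..n} j))\<^sup>2 - real (cnt x {1..n} j))"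

lemma pair_count_nonneg: "pair_count x \<ge> 0"
  unfolding pair_count_def using of_nat_le_power2 by (intro sum_nonneg) simp

lemma pair_count_ge_2: "psi2 cI cA n N p t x \<Longrightarrow> pair_count x \<ge> 2"
proof -
  assume "psi2 cI cA n N p t x"
  then obtain j where j: "j \<in> {A<..N}" "cnt x {1..n} j \<ge> 2" unfolding psi2_iff by auto
  have "2 * 1 \<le> real (cnt x {1..n} j) * (real (cnt x {1..n} j) - 1)"
    using j(2) by (intro mult_mono) auto
  also have "\<dots> = (real (cnt x {1..n} j))\<^sup>2 - real (cnt x {1..n} j)"
    by (simp add: power2_eq_square algebra_simps)
  also have "\<dots> \<le> pair_count x"
    using j(1) of_nat_le_power2 unfolding pair_count_def by (intro member_le_sum) auto
  finally show ?thesis by simp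
qed

lemma expect_pair_count: "expect n N q pair_count = (\<Sum>j\<in>{A<..N}. real n * (real n - 1) * (q j)\<^sup>2)"
  unfolding pair_count_def expect_sum expect_diff
proof (intro sum.cong refl)
  fix j assume "j \<in> {A<..N}"
  then have j: "j \<in> {1..N}" by auto
  show "expect n N q (\<lambda>x. (real (cnt x {1..n} j))\<^sup>2) - expect n N q (\<lambda>x. real (cnt x {1..n} j)) =
      real n * (real n - 1) * (q j)\<^sup>2"
    by (simp only: expect_cnt_sq[OF order_refl j] expect_cnt[OF order_refl j]) simp
qed

lemma typeI_psi2: "Prob n N p (psi2 cI cA n N p t) \<le> (cI + cA^4) / 2"
proof -
  have "Prob n N p (psi2 cI cA n N p t) \<le> Prob n N p (\<lambda>x. pair_count x \<ge> 2)"
    using p_cube pair_count_ge_2 by (intro Prob_mono) auto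
  also have "\<dots> \<le> expect n N p pair_count / 2"
    using p_cube pair_count_nonneg by (intro Prob_markov) auto
  also have "expect n N p pair_count \<le> (real n)\<^sup>2 * (\<Sum>j\<in>{A<..N}. (p j)\<^sup>2)"
    unfolding expect_pair_count sum_distrib_left
    by (intro sum_mono mult_right_mono) (use n_pos in \<open>auto simp: power2_eq_square\<close>)
  also have "\<dots> \<le> (real n)\<^sup>2 * (cA^4 / (real n)\<^sup>2 + cI / (real n)\<^sup>2)"
    unfolding sum_greaterThan_A using mid_sq_le tail_sq_le by (intro mult_left_mono add_mono) auto
  also have "\<dots> = cA^4 + cI" using n_pos by (simp add: field_simps)
  finally show ?thesis by (simp add: add.commute)
qed

lemma typeI:
  assumes eta: "eta > 0" and c: "cI \<le> eta / 8" "cA \<le> eta / 8"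
  shows "Prob n N p (test eta cI cA n N p t) \<le> eta / 2"
proof -
  have "Prob n N p (test eta cI cA n N p t) \<le>
      Prob n N p (psi_bulk eta cI cA n N p t) + (Prob n N p (psi1 eta cI cA n N p t) + Prob n N p (psi2 cI cA n N p t))"
    unfolding test_def using Prob_disj_le[OF p_cube] by (meson add_left_mono order_trans)
  moreover have "cA^4 \<le> cA" using power_decreasing[of 1 4 cA] cA by simp
  then have "(cI + cA^4) / 2 \<le> eta / 8" using c by simp
  ultimately show ?thesis
    using typeI_bulk[OF eta] typeI_psi1[OF eta] typeI_psi2 eta by linarith
qed

end

section \<open>Type II error: the bulk regime\<close>

lemma split_term_excess_le:
  fixes v d p k :: real
  assumes "k > 0" "0 \<le> v" "v \<le> (p + \<bar>d\<bar>) / k" "p \<ge> 0"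
  shows "(v + d\<^sup>2)\<^sup>2 - d^4 \<le> 2 * (p\<^sup>2 + d\<^sup>2) / k\<^sup>2 + 2 * ((p + \<bar>d\<bar>) / k) * d\<^sup>2"
proof -
  have "v\<^sup>2 \<le> ((p + \<bar>d\<bar>) / k)\<^sup>2" using assms by (intro power_mono) auto
  also have "\<dots> \<le> 2 * (p\<^sup>2 + d\<^sup>2) / k\<^sup>2"
  proof -
    have "(p + \<bar>d\<bar>)\<^sup>2 \<le> 2 * (p\<^sup>2 + d\<^sup>2)"
      using zero_le_power2[of "p - \<bar>d\<bar>"] by (simp add: power2_eq_square algebra_simps)
    then show ?thesis using assms(1) by (simp add: power_divide divide_right_mono)
  qed
  finally have "v\<^sup>2 \<le> 2 * (p\<^sup>2 + d\<^sup>2) / k\<^sup>2" .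
  moreover have "v * d\<^sup>2 \<le> ((p + \<bar>d\<bar>) / k) * d\<^sup>2" using assms by (intro mult_right_mono) auto
  moreover have "(v + d\<^sup>2)\<^sup>2 - d^4 = v\<^sup>2 + 2 * (v * d\<^sup>2)"
    by (simp add: power2_eq_square eval_nat_numeral algebra_simps)
  ultimately show ?thesis by linarith
qed

text \<open>In the bulk statistic, \<open>M\<close> bounds the weight \<open>w\<close>, \<open>sqS\<close> bounds \<open>w p\<close> and \<open>E\<close> bounds
  the signal \<open>w (q - p)\<^sup>2\<close> of a single summand.\<close>

lemma split_variance_term_le:
  fixes w p q k M sqS E :: real
  assumes k: "k > 0" and w: "w > 0" "w \<le> M" and p: "p \<ge> 0" and wp: "w * p \<le> sqS"
    and q: "0 \<le> q" "q \<le> 1" and wd: "w * (q - p)\<^sup>2 \<le> E"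
  shows "w\<^sup>2 * ((q * (1 - q) / k + (q - p)\<^sup>2)\<^sup>2 - (q - p)^4) \<le>
     2 * (w\<^sup>2 * p\<^sup>2) / k\<^sup>2 + 2 * M * (w * (q - p)\<^sup>2) / k\<^sup>2 + 2 * sqS * (w * (q - p)\<^sup>2) / k
     + 2 * sqrt (M * E) * (w * (q - p)\<^sup>2) / k"
proof -
  define d where "d = q - p"
  have wd0: "w * d\<^sup>2 \<ge> 0" using w by simp
  have "q * (1 - q) \<le> q" using q by (simp add: mult_left_le)
  also have "q \<le> p + \<bar>d\<bar>" unfolding d_def by simp
  finally have "q * (1 - q) / k \<le> (p + \<bar>d\<bar>) / k" using k by (simp add: divide_right_mono)
  then have "w\<^sup>2 * ((q * (1 - q) / k + d\<^sup>2)\<^sup>2 - d^4) \<le>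
      w\<^sup>2 * (2 * (p\<^sup>2 + d\<^sup>2) / k\<^sup>2 + 2 * ((p + \<bar>d\<bar>) / k) * d\<^sup>2)"
    using q k p by (intro mult_left_mono split_term_excess_le) auto
  also have "\<dots> = 2 * (w\<^sup>2 * p\<^sup>2) / k\<^sup>2 + 2 * w * (w * d\<^sup>2) / k\<^sup>2 + 2 * (w * p) * (w * d\<^sup>2) / k
      + 2 * (w * \<bar>d\<bar>) * (w * d\<^sup>2) / k"
    by (simp add: power2_eq_square algebra_simps add_divide_distrib)
  also have "\<dots> \<le> 2 * (w\<^sup>2 * p\<^sup>2) / k\<^sup>2 + 2 * M * (w * d\<^sup>2) / k\<^sup>2 + 2 * sqS * (w * d\<^sup>2) / k
      + 2 * sqrt (M * E) * (w * d\<^sup>2) / k"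
  proof -
    have "(w * \<bar>d\<bar>)\<^sup>2 = w * (w * d\<^sup>2)" by (simp add: power2_eq_square)
    also have "\<dots> \<le> M * E" using w wd wd0 unfolding d_def by (intro mult_mono) auto
    finally have "(w * \<bar>d\<bar>)\<^sup>2 \<le> M * E" .
    then have "w * \<bar>d\<bar> \<le> sqrt (M * E)" using w real_sqrt_le_mono by fastforce
    then show ?thesis
      using w wp wd0 k by (intro add_mono order_refl divide_right_mono mult_right_mono) auto
  qed
  finally show ?thesis unfolding d_def .
qed

lemma normalized_variance_le:
  fixes u C c :: real
  assumes u: "0 < u" "u \<le> 4 / C\<^sup>2" and C: "C \<ge> 2" and c: "0 < c" "c \<le> 1"
  shows "8 * u\<^sup>2 + 8 * u / c\<^sup>2 + 4 * u + 4 * sqrt u / c \<le> 48 / (C * c\<^sup>2)"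
proof -
  have c2: "c\<^sup>2 \<le> 1" "c\<^sup>2 > 0" using c by (auto simp: power2_eq_square mult_le_one)
  have "4 / C\<^sup>2 \<le> 2 / C" using C by (simp add: divide_simps power2_eq_square)
  then have u2: "u \<le> 2 / C" using u by simp
  have "u * C \<le> 2" using u2 C by (simp add: divide_simps)
  moreover have "u * 2 \<le> u * C" using u C by (intro mult_left_mono) auto
  ultimately have u1: "u \<le> 1" by linarith
  have su: "sqrt u \<le> 2 / C"
    using real_sqrt_le_mono[OF u(2)] C by (simp add: real_sqrt_divide)
  have "C * c\<^sup>2 \<le> C" using C c2 by (simp add: mult_left_le)
  then have four: "2 / C \<le> 2 / (C * c\<^sup>2)" using C c2 by (intro divide_left_mono) auto
  have "u\<^sup>2 \<le> u" using u u1 by (simp add: power2_eq_square mult_left_le)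
  then have "8 * u\<^sup>2 \<le> 16 / (C * c\<^sup>2)" using u2 four by linarith
  moreover have "8 * u / c\<^sup>2 \<le> 16 / (C * c\<^sup>2)"
    using u2 c2 C by (simp add: divide_simps mult.commute)
  moreover have "4 * u \<le> 8 / (C * c\<^sup>2)" using u2 four by linarith
  moreover have "4 * sqrt u / c \<le> 8 / (C * c\<^sup>2)"
  proof -
    have "4 * sqrt u / c \<le> 4 * (2 / C) / c" using su c by (intro divide_right_mono) auto
    also have "\<dots> \<le> 8 / (C * c\<^sup>2)" using C c2 c by (simp add: divide_simps power2_eq_square)
    finally show ?thesis .
  qed
  moreover have "16 / (C * c\<^sup>2) + 16 / (C * c\<^sup>2) + 8 / (C * c\<^sup>2) + 8 / (C * c\<^sup>2) = 48 / (C * c\<^sup>2)"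
    by (simp add: add_divide_distrib[symmetric])
  ultimately show ?thesis by linarith
qed

context test_setting
begin

lemma T_bulk_var_le:
  assumes q: "in_cube N q"
  defines "M \<equiv> real n * sqrt S / cA\<^sup>2"
  shows "expect n N q (\<lambda>x. (T_bulk cI cA n N p t x - bulk_signal q)\<^sup>2) \<le>
    2 * S / (real k)\<^sup>2 + 2 * M * bulk_signal q / (real k)\<^sup>2 + 2 * sqrt S * bulk_signal q / real k
    + 2 * sqrt (M * bulk_signal q) * bulk_signal q / real k"
proof -
  define E where "E = bulk_signal q"
  have k: "real k > 0" using k_pos by simp
  have "expect n N q (\<lambda>x. (T_bulk cI cA n N p t x - E)\<^sup>2) \<le>
      (\<Sum>i\<in>{1..A}. 2 * ((w i)\<^sup>2 * (p i)\<^sup>2) / (real k)\<^sup>2 + 2 * M * (w i * (q i - p i)\<^sup>2) / (real k)\<^sup>2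
      + 2 * sqrt S * (w i * (q i - p i)\<^sup>2) / real k + 2 * sqrt (M * E) * (w i * (q i - p i)\<^sup>2) / real k)"
    unfolding E_def T_bulk_var
  proof (intro sum_mono split_variance_term_le[OF k])
    fix i assume i: "i \<in> {1..A}"
    then have iI: "i \<in> {1..I}" using A_le_I by auto
    show "w i > 0" "p i \<ge> 0" using w_pos[OF iI] p_pos[OF iI] by auto
    show "w i \<le> M" unfolding M_def using w_le[OF i] .
    show "w i * p i \<le> sqrt S" using w_mult_p_le[OF iI] .
    show "0 \<le> q i" "q i \<le> 1" using q iI I_le_N unfolding in_cube_def by auto
    show "w i * (q i - p i)\<^sup>2 \<le> bulk_signal q" unfolding bulk_signal_def
      using i w_pos A_le_I by (intro member_le_sum) (auto simp: less_imp_le)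
  qed
  also have "\<dots> = 2 * (\<Sum>i\<in>{1..A}. (w i)\<^sup>2 * (p i)\<^sup>2) / (real k)\<^sup>2 + 2 * M * E / (real k)\<^sup>2
      + 2 * sqrt S * E / real k + 2 * sqrt (M * E) * E / real k"
    unfolding E_def bulk_signal_def by (simp add: sum.distrib sum_distrib_left sum_divide_distrib)
  also have "(\<Sum>i\<in>{1..A}. (w i)\<^sup>2 * (p i)\<^sup>2) = S_A"
    unfolding S_A_def using A_le_I by (intro sum.cong refl) (auto simp: w_sq_mult_p_sq)
  also have "2 * S_A / (real k)\<^sup>2 \<le> 2 * S / (real k)\<^sup>2"
    using S_A_le_S by (simp add: divide_right_mono)
  finally show ?thesis unfolding E_def by simp
qed

lemma T_bulk_var_le_normalized:
  assumes q: "in_cube N q" and E: "bulk_signal q > 0" and Sp: "S > 0"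
  defines "u \<equiv> (sqrt S / real n) / bulk_signal q"
  shows "expect n N q (\<lambda>x. (T_bulk cI cA n N p t x - bulk_signal q)\<^sup>2) \<le>
    (bulk_signal q)\<^sup>2 * (8 * u\<^sup>2 + 8 * u / cA\<^sup>2 + 4 * u + 4 * sqrt u / cA)"
proof -
  define E where "E = bulk_signal q"
  have n: "real n > 0" "real n = 2 * real k" using n_pos n_eq by auto
  have sqrtS: "sqrt S = u * E * real n" unfolding u_def E_def using n E by simp
  have "expect n N q (\<lambda>x. (T_bulk cI cA n N p t x - E)\<^sup>2) \<le>
      2 * S / (real k)\<^sup>2 + 2 * (real n * sqrt S / cA\<^sup>2) * E / (real k)\<^sup>2 + 2 * sqrt S * E / real k
      + 2 * sqrt ((real n * sqrt S / cA\<^sup>2) * E) * E / real k"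
    unfolding E_def by (rule T_bulk_var_le[OF q])
  also have "2 * S / (real k)\<^sup>2 = E\<^sup>2 * (8 * u\<^sup>2)"
  proof -
    have "S = (u * E * real n)\<^sup>2" using sqrtS Sp by (metis real_sqrt_pow2 less_imp_le)
    then show ?thesis using n by (simp add: field_simps power2_eq_square)
  qed
  also have "2 * (real n * sqrt S / cA\<^sup>2) * E / (real k)\<^sup>2 = E\<^sup>2 * (8 * u / cA\<^sup>2)"
    unfolding sqrtS using n cA by (simp add: field_simps power2_eq_square)
  also have "2 * sqrt S * E / real k = E\<^sup>2 * (4 * u)"
    unfolding sqrtS using n by (simp add: field_simps power2_eq_square)
  also have "2 * sqrt ((real n * sqrt S / cA\<^sup>2) * E) * E / real k = E\<^sup>2 * (4 * sqrt u / cA)"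
  proof -
    have "(real n * sqrt S / cA\<^sup>2) * E = (real n / cA)\<^sup>2 * (u * E\<^sup>2)"
      unfolding sqrtS by (simp add: power2_eq_square field_simps)
    then have "sqrt ((real n * sqrt S / cA\<^sup>2) * E) = real n / cA * (sqrt u * E)"
      using n cA E unfolding E_def by (simp add: real_sqrt_mult)
    then show ?thesis using n cA by (simp add: field_simps power2_eq_square)
  qed
  finally show ?thesis unfolding E_def by (simp add: algebra_simps)
qed

lemma typeII_bulk_core:
  assumes eta: "eta > 0" and q: "in_cube N q" and A1: "A \<ge> 1"
    and C2: "C \<ge> 2" and Cc: "C\<^sup>2 \<ge> 8 * cbar eta" and Ce: "C * (eta * cA\<^sup>2) \<ge> 384"
    and E_lower: "bulk_signal q \<ge> C\<^sup>2 * sqrt S / (4 * real n)"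
  shows "Prob n N q (\<lambda>x. \<not> psi_bulk eta cI cA n N p t x) \<le> eta / 2"
proof -
  define E where "E = bulk_signal q"
  define g where "g = sqrt S / real n"
  have Sp: "S > 0" using S_pos A1 A_le_I by auto
  have g: "g > 0" unfolding g_def using Sp n_pos by simp
  have Eg: "E \<ge> C\<^sup>2 * g / 4" using E_lower unfolding E_def g_def by simp
  moreover have "C\<^sup>2 * g / 4 > 0" using g C2 by simp
  ultimately have Ep: "E > 0" by linarith
  have u: "g / E > 0" "g / E \<le> 4 / C\<^sup>2" using g Ep Eg C2 by (auto simp: divide_simps mult.commute)
  have threshold: "cbar eta / real n * sqrt S_A \<le> E / 2"
  proof -
    have "cbar eta / real n * sqrt S_A \<le> cbar eta * g"
      unfolding g_def using S_A_le_S cbar_pos[OF eta] n_pos by (simp add: divide_right_mono)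
    also have "\<dots> \<le> cbar eta * (4 * E / C\<^sup>2)"
      using Eg C2 cbar_pos[OF eta] by (intro mult_left_mono) (auto simp: field_simps)
    also have "\<dots> \<le> E / 2"
      using Cc Ep C2 by (simp add: field_simps)
    finally show ?thesis .
  qed
  have "Prob n N q (\<lambda>x. \<not> psi_bulk eta cI cA n N p t x) \<le>
      Prob n N q (\<lambda>x. \<bar>T_bulk cI cA n N p t x - E\<bar> \<ge> E / 2)"
  proof (intro Prob_mono[OF q])
    fix x assume "\<not> psi_bulk eta cI cA n N p t x"
    then have "T_bulk cI cA n N p t x \<le> cbar eta / real n * sqrt S_A" by (simp add: psi_bulk_iff not_less)
    then show "\<bar>T_bulk cI cA n N p t x - E\<bar> \<ge> E / 2" using threshold by linarith
  qed
  also have "\<dots> \<le> (E\<^sup>2 * (48 / (C * cA\<^sup>2))) / (E / 2)\<^sup>2"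
  proof (rule Prob_chebyshev_le[OF q])
    have "expect n N q (\<lambda>x. (T_bulk cI cA n N p t x - E)\<^sup>2) \<le>
        E\<^sup>2 * (8 * (g / E)\<^sup>2 + 8 * (g / E) / cA\<^sup>2 + 4 * (g / E) + 4 * sqrt (g / E) / cA)"
      using T_bulk_var_le_normalized[OF q _ Sp] Ep unfolding E_def g_def by simp
    also have "\<dots> \<le> E\<^sup>2 * (48 / (C * cA\<^sup>2))"
      by (intro mult_left_mono normalized_variance_le[OF u C2 cA]) simp
    finally show "expect n N q (\<lambda>x. (T_bulk cI cA n N p t x - E)\<^sup>2) \<le> E\<^sup>2 * (48 / (C * cA\<^sup>2))" .
  qed (use Ep in simp)
  also have "\<dots> = 192 / (C * cA\<^sup>2)" using Ep by (simp add: field_simps power2_eq_square)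
  also have "\<dots> \<le> eta / 2"
    using Ce C2 cA eta by (simp add: divide_simps mult.commute mult.left_commute)
  finally show ?thesis .
qed

end

lemma powr_two_div_ge_of_half_powr:
  fixes x y t :: real
  assumes "y > 0" "1 \<le> t" "t \<le> 2" "x \<ge> y powr t / 2"
  shows "x powr (2/t) \<ge> y\<^sup>2 / 4"
proof -
  have "(y powr t / 2) powr (2/t) = y\<^sup>2 / 2 powr (2/t)"
    using assms by (simp add: powr_divide powr_powr powr_numeral)
  moreover have "2 powr (2/t) \<le> 2 powr 2" using assms by (intro powr_mono) (auto simp: divide_simps)
  then have "y\<^sup>2 / 4 \<le> y\<^sup>2 / 2 powr (2/t)" by (intro divide_left_mono) (auto simp: powr_numeral)
  moreover have "(y powr t / 2) powr (2/t) \<le> x powr (2/t)" using assms by (intro powr_mono2) auto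
  ultimately show ?thesis by linarith
qed

context test_setting
begin

lemma bulk_dist_le_Holder:
  "(\<Sum>i\<in>{1..A}. \<bar>q i - p i\<bar> powr t) \<le> bulk_signal q powr (t/2) * S_A powr ((2-t)/2)"
proof -
  have "(\<Sum>i\<in>{1..A}. \<bar>q i - p i\<bar> powr t) =
      (\<Sum>i\<in>{1..A}. (w i * (q i - p i)\<^sup>2) powr (t/2) * (p i powr r) powr ((2-t)/2))"
  proof (intro sum.cong refl)
    fix i assume "i \<in> {1..A}"
    then have i: "i \<in> {1..I}" using A_le_I by auto
    have pi: "p i > 0" using p_pos[OF i] .
    have "(p i powr r) powr ((2-t)/2) = p i powr (b * (t/2))"
      using r_2_minus_t by (simp add: powr_powr algebra_simps)
    moreover have "w i powr (t/2) = p i powr (-b * (t/2))" using w_eq[OF i] by (simp add: powr_powr)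
    moreover have "((q i - p i)\<^sup>2) powr (t/2) = \<bar>q i - p i\<bar> powr t" if "q i \<noteq> p i"
      using that power_powr[of "\<bar>q i - p i\<bar>" 2 "t/2"] by simp
    moreover have "p i powr (-b * (t/2)) * p i powr (b * (t/2)) = 1"
      using pi by (simp add: powr_add[symmetric])
    ultimately show "\<bar>q i - p i\<bar> powr t = (w i * (q i - p i)\<^sup>2) powr (t/2) * (p i powr r) powr ((2-t)/2)"
      by (cases "q i = p i") (simp_all add: powr_mult algebra_simps)
  qed
  also have "\<dots> \<le> (\<Sum>i\<in>{1..A}. w i * (q i - p i)\<^sup>2) powr (t/2) * (\<Sum>i\<in>{1..A}. p i powr r) powr ((2-t)/2)"
    using t_range w_pos A_le_I by (intro sum_powr_Holder) (auto simp: add_divide_distrib[symmetric] less_imp_le)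
  finally show ?thesis unfolding bulk_signal_def S_A_def .
qed

lemma bulk_dist_powr_le:
  assumes A1: "A \<ge> 1"
  shows "(\<Sum>i\<in>{1..A}. \<bar>q i - p i\<bar> powr t) powr (2/t) \<le> bulk_signal q * S powr ((2-t)/t)"
proof -
  have tp: "t > 0" using t_range by simp
  have "(\<Sum>i\<in>{1..A}. \<bar>q i - p i\<bar> powr t) powr (2/t) \<le>
      (bulk_signal q powr (t/2) * S_A powr ((2-t)/2)) powr (2/t)"
    using bulk_dist_le_Holder tp by (intro powr_mono2) (auto intro: sum_nonneg)
  also have "\<dots> = bulk_signal q * S_A powr ((2-t)/t)"
  proof -
    have "(2-t)/2 * (2/t) = (2-t)/t" "t/2 * (2/t) = 1" using tp by (simp_all add: field_simps)
    then show ?thesis using bulk_signal_nonneg[of q] by (simp add: powr_mult powr_powr)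
  qed
  also have "\<dots> \<le> bulk_signal q * S powr ((2-t)/t)"
    using S_A_le_S S_A_pos[OF A1] t_range bulk_signal_nonneg by (intro mult_left_mono powr_mono2) auto
  finally show ?thesis .
qed

lemma bulk_signal_ge:
  assumes C: "C > 0" and A1: "A \<ge> 1"
    and dist: "(\<Sum>i\<in>{1..A}. \<bar>q i - p i\<bar> powr t) \<ge> (C * R) powr t / 2"
  shows "bulk_signal q \<ge> C\<^sup>2 * sqrt S / (4 * real n)"
proof -
  have Sp: "S > 0" using S_pos A1 A_le_I by auto
  have S_powr: "S powr (1/r) = sqrt S * S powr ((2-t)/t)"
  proof -
    have "1/r = 1/2 + (2-t)/t" unfolding r_def r_of_def using t_range by (simp add: field_simps)
    then show ?thesis using Sp by (simp add: powr_add powr_half_sqrt)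
  qed
  have "C\<^sup>2 * sqrt S / (4 * real n) * S powr ((2-t)/t) = (C * rho_bulk)\<^sup>2 / 4"
    unfolding rho_bulk_def S_powr using Sp n_pos by (simp add: power_mult_distrib)
  also have "\<dots> \<le> (C * R)\<^sup>2 / 4"
    using R_ge rho_bulk_nonneg C by (intro divide_right_mono power_mono mult_left_mono) auto
  also have "\<dots> \<le> (\<Sum>i\<in>{1..A}. \<bar>q i - p i\<bar> powr t) powr (2/t)"
    using C R_pos t_range dist by (intro powr_two_div_ge_of_half_powr) auto
  also have "\<dots> \<le> bulk_signal q * S powr ((2-t)/t)" by (rule bulk_dist_powr_le[OF A1])
  finally show ?thesis using Sp by (simp add: mult_right_le_imp_le)
qed

end

section \<open>Type II error: the collision and the linear statistic\<close>

lemma collision_term_le: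
  fixes k q s :: real
  assumes k: "k > 0" and q: "0 \<le> q" "q \<le> 1" and kq: "k * q \<le> s"
  shows "(k\<^sup>2)\<^sup>2 * ((q * (1 - q) / k + q\<^sup>2)\<^sup>2 - q^4) \<le> k\<^sup>2 * q\<^sup>2 + 2 * s * (k\<^sup>2 * q\<^sup>2)"
proof -
  define v where "v = q * (1 - q) / k"
  have v0: "0 \<le> v" unfolding v_def using q k by simp
  have v_le: "v \<le> q / k" unfolding v_def using q k by (intro divide_right_mono) (auto simp: mult_left_le)
  have "(k\<^sup>2)\<^sup>2 * ((v + q\<^sup>2)\<^sup>2 - q^4) = (k\<^sup>2)\<^sup>2 * v\<^sup>2 + 2 * ((k\<^sup>2)\<^sup>2 * v * q\<^sup>2)"
    by (simp add: power2_eq_square eval_nat_numeral algebra_simps)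
  also have "(k\<^sup>2)\<^sup>2 * v\<^sup>2 \<le> (k\<^sup>2)\<^sup>2 * (q / k)\<^sup>2"
    using v0 v_le by (intro mult_left_mono power_mono) auto
  also have "(k\<^sup>2)\<^sup>2 * (q / k)\<^sup>2 = k\<^sup>2 * q\<^sup>2"
    using k by (simp add: field_simps power2_eq_square)
  also have "(k\<^sup>2)\<^sup>2 * v * q\<^sup>2 \<le> (k\<^sup>2)\<^sup>2 * (q / k) * q\<^sup>2"
    using v_le by (intro mult_right_mono mult_left_mono) auto
  also have "(k\<^sup>2)\<^sup>2 * (q / k) * q\<^sup>2 = (k * q) * (k\<^sup>2 * q\<^sup>2)"
    using k by (simp add: field_simps power2_eq_square)
  also have "\<dots> \<le> s * (k\<^sup>2 * q\<^sup>2)" using kq by (intro mult_right_mono) auto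
  finally show ?thesis unfolding v_def by simp
qed

context test_setting
begin

lemma cnt_halves: "cnt x {1..n} j = cnt x {1..k} j + cnt x {k+1..n} j"
proof -
  have "{l\<in>{1..n}. x l j} = {l\<in>{1..k}. x l j} \<union> {l\<in>{k+1..n}. x l j}" using n_eq by auto
  then show ?thesis unfolding cnt_def by (simp add: card_Un_disjoint disjoint_iff)
qed

text \<open>An unbiased estimator of \<open>k\<^sup>2 \<Sum>\<^sub>j\<^sub>>\<^sub>A q\<^sub>j\<^sup>2\<close> that vanishes unless two samples
  collide on a light coordinate.\<close>

definition "collision_stat x = (\<Sum>j\<in>{A<..N}. (real k)\<^sup>2 * freq_dev {1..k} 0 j x * freq_dev {k+1..n} 0 j x)"
definition "collision_mean q = (\<Sum>j\<in>{A<..N}. (real k)\<^sup>2 * (q j)\<^sup>2)"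

lemma collision_stat_eq_0: "\<not> psi2 cI cA n N p t x \<Longrightarrow> collision_stat x = 0"
proof -
  assume "\<not> psi2 cI cA n N p t x"
  then have lt: "\<forall>j\<in>{A<..N}. cnt x {1..n} j < 2" unfolding psi2_iff by auto
  show ?thesis unfolding collision_stat_def
  proof (intro sum.neutral ballI)
    fix j assume "j \<in> {A<..N}"
    then have "cnt x {1..k} j + cnt x {k+1..n} j < 2" using lt cnt_halves by auto
    then have "cnt x {1..k} j = 0 \<or> cnt x {k+1..n} j = 0" by auto
    then show "(real k)\<^sup>2 * freq_dev {1..k} 0 j x * freq_dev {k+1..n} 0 j x = 0"
      unfolding freq_dev_def by auto
  qed
qed

lemma greaterThan_A_subset: "{A<..N} \<subseteq> {1..N}"
  by auto

lemma collision_var_le: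
  assumes q: "in_cube N q"
  shows "expect n N q (\<lambda>x. (collision_stat x - collision_mean q)\<^sup>2) \<le>
    collision_mean q + 2 * sqrt (collision_mean q) * collision_mean q"
proof -
  define m where "m = collision_mean q"
  have k: "real k > 0" using k_pos by simp
  have qj: "0 \<le> q j" "q j \<le> 1" if "j \<in> {A<..N}" for j using q that unfolding in_cube_def by auto
  have "expect n N q (\<lambda>x. (collision_stat x - m)\<^sup>2) =
      (\<Sum>j\<in>{A<..N}. ((real k)\<^sup>2)\<^sup>2 * ((q j * (1 - q j) / k + (q j)\<^sup>2)\<^sup>2 - (q j)^4))"
    unfolding collision_stat_def m_def collision_mean_def
    using split_sample_var[OF n_eq k_pos, where J="{A<..N}" and N=N and w="\<lambda>_. (real k)\<^sup>2"
        and c="\<lambda>_. 0" and q=q] greaterThan_A_subset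
    by simp
  also have "\<dots> \<le> (\<Sum>j\<in>{A<..N}. (real k)\<^sup>2 * (q j)\<^sup>2 + 2 * sqrt m * ((real k)\<^sup>2 * (q j)\<^sup>2))"
  proof (intro sum_mono collision_term_le)
    fix j assume j: "j \<in> {A<..N}"
    show "real k > 0" "0 \<le> q j" "q j \<le> 1" using k qj[OF j] by auto
    have "(real k)\<^sup>2 * (q j)\<^sup>2 \<le> m" unfolding m_def collision_mean_def using j
      by (intro member_le_sum) auto
    then have "sqrt ((real k * q j)\<^sup>2) \<le> sqrt m" by (simp add: power_mult_distrib)
    then show "real k * q j \<le> sqrt m" using qj[OF j] k by simp
  qed
  also have "\<dots> = m + 2 * sqrt m * m"
    unfolding m_def collision_mean_def by (simp add: sum.distrib sum_distrib_left)
  finally show ?thesis unfolding m_def .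
qed

lemma typeII_collision:
  assumes eta: "eta > 0" "eta < 1" and q: "in_cube N q" and mu: "collision_mean q \<ge> 36 / eta\<^sup>2"
  shows "Prob n N q (\<lambda>x. \<not> psi2 cI cA n N p t x) \<le> eta / 2"
proof -
  define m where "m = collision_mean q"
  have "36 / eta\<^sup>2 > 0" using eta by simp
  then have mp: "m > 0" unfolding m_def using mu by linarith
  have "Prob n N q (\<lambda>x. \<not> psi2 cI cA n N p t x) \<le> Prob n N q (\<lambda>x. \<bar>collision_stat x - m\<bar> \<ge> m)"
    using q mp by (intro Prob_mono) (auto simp: collision_stat_eq_0)
  also have "\<dots> \<le> (m + 2 * sqrt m * m) / m\<^sup>2"
    by (rule Prob_chebyshev_le[OF q mp]) (use collision_var_le[OF q] in \<open>simp add: m_def\<close>)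
  also have "\<dots> = 1 / m + 2 / sqrt m"
    using mp by (simp add: field_simps power2_eq_square)
  also have "\<dots> \<le> eta / 36 + eta / 3"
  proof (intro add_mono)
    have "1 / m \<le> 1 / (36 / eta\<^sup>2)" using mu mp eta unfolding m_def by (intro divide_left_mono) auto
    also have "\<dots> \<le> eta / 36" using eta by (simp add: power2_eq_square mult_left_le)
    finally show "1 / m \<le> eta / 36" .
    have "6 / eta \<le> sqrt m"
      using real_sqrt_le_mono[OF mu[folded m_def]] eta by (simp add: real_sqrt_divide)
    then have "2 / sqrt m \<le> 2 / (6 / eta)" using eta mp by (intro divide_left_mono) auto
    then show "2 / sqrt m \<le> eta / 3" by simp
  qed
  also have "\<dots> \<le> eta / 2" using eta by simp
  finally show ?thesis .
qed

definition "up_set q = {i\<in>{A<..N}. q i > p i}"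
definition "down_set q = {i\<in>{A<..N}. q i \<le> p i}"
definition "up_mass q = (\<Sum>i\<in>up_set q. q i - p i)"

lemma up_mass_nonneg: "up_mass q \<ge> 0"
  unfolding up_mass_def up_set_def by (intro sum_nonneg) auto

lemma sum_up_down: "(\<Sum>i\<in>{A<..N}. f i) = (\<Sum>i\<in>up_set q. f i) + (\<Sum>i\<in>down_set q. f i)"
proof -
  have fin: "finite (up_set q)" "finite (down_set q)" unfolding up_set_def down_set_def by auto
  have "{A<..N} = up_set q \<union> down_set q" "up_set q \<inter> down_set q = {}"
    unfolding up_set_def down_set_def by auto
  then show ?thesis using sum.union_disjoint[OF fin] by simp
qed

lemma light_shift_bounds:
  assumes q: "in_cube N q"
  shows "up_mass q - P_light \<le> (\<Sum>i\<in>{A<..N}. q i - p i)" "(\<Sum>i\<in>{A<..N}. q i - p i) \<le> up_mass q"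
proof -
  have "(\<Sum>i\<in>down_set q. q i - p i) \<le> 0" unfolding down_set_def by (intro sum_nonpos) auto
  moreover have "(\<Sum>i\<in>down_set q. q i) \<ge> 0"
    using q unfolding down_set_def in_cube_def by (intro sum_nonneg) auto
  then have "(\<Sum>i\<in>down_set q. q i - p i) \<ge> - (\<Sum>i\<in>down_set q. p i)"
    by (simp add: sum_subtractf)
  moreover have "(\<Sum>i\<in>down_set q. p i) \<le> P_light"
    unfolding P_light_def using sum_up_down[of p q] p_nonneg
    by (simp add: up_set_def) (intro sum_nonneg, auto)
  ultimately show "up_mass q - P_light \<le> (\<Sum>i\<in>{A<..N}. q i - p i)" "(\<Sum>i\<in>{A<..N}. q i - p i) \<le> up_mass q"
    using sum_up_down[of "\<lambda>i. q i - p i" q] unfolding up_mass_def by linarith+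
qed

lemma T1_var_le:
  assumes q: "in_cube N q"
  shows "expect n N q (\<lambda>x. (T1 cI cA n N p t x - (\<Sum>i\<in>{A<..N}. q i - p i))\<^sup>2) \<le>
    (P_light + (\<Sum>i\<in>{A<..N}. q i - p i)) / real n"
proof -
  have "expect n N q (\<lambda>x. (T1 cI cA n N p t x - (\<Sum>i\<in>{A<..N}. q i - p i))\<^sup>2) \<le> (\<Sum>i\<in>{A<..N}. q i / n)"
    unfolding T1_var using q n_pos unfolding in_cube_def
    by (intro sum_mono divide_right_mono) (auto simp: mult_left_le)
  also have "\<dots> = (P_light + (\<Sum>i\<in>{A<..N}. q i - p i)) / real n"
    unfolding P_light_def by (simp add: sum_divide_distrib[symmetric] sum.distrib[symmetric])
  finally show ?thesis .
qed

lemma up_mass_large: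
  assumes L: "L \<ge> 64" and up: "up_mass q \<ge> L * (P_light + 1 / real n)"
  shows "L \<le> real n * up_mass q" "up_mass q > 0" "P_light \<le> up_mass q / 2"
proof -
  define D where "D = up_mass q"
  have n: "real n > 0" using n_pos by simp
  have "L * (1 / real n) \<le> L * (P_light + 1 / real n)"
    using L P_light_nonneg by (intro mult_left_mono) auto
  then show nD: "L \<le> real n * up_mass q" using up n by (simp add: field_simps)
  then have "real n * D > 0" using L unfolding D_def by linarith
  then show Dp: "up_mass q > 0" using n unfolding D_def by (simp add: zero_less_mult_iff)
  have "P_light + 1 / real n \<le> D / L" using up L unfolding D_def by (simp add: pos_le_divide_eq mult.commute)
  moreover have "D / L \<le> D / 2" using Dp L unfolding D_def by (intro divide_left_mono) auto
  moreover have "0 \<le> 1 / real n" by simp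
  ultimately show "P_light \<le> up_mass q / 2" unfolding D_def by linarith
qed

lemma psi1_threshold_le:
  assumes eta: "eta > 0" and L: "L \<ge> 2 * cbar eta" and up: "up_mass q \<ge> L * (P_light + 1 / real n)"
  shows "cbar eta * sqrt (P_light / real n) \<le> up_mass q / 4"
proof -
  have c: "cbar eta > 0" using cbar_pos[OF eta] .
  then have "L > 0" using L by linarith
  have "sqrt (P_light / real n) \<le> (P_light + 1 / real n) / 2"
    using arith_geo_mean_sqrt[of P_light "1 / real n"] P_light_nonneg n_pos by simp
  also have "\<dots> \<le> up_mass q / (2 * L)" using up \<open>L > 0\<close> by (simp add: field_simps)
  finally have "cbar eta * sqrt (P_light / real n) \<le> cbar eta * (up_mass q / (2 * L))"
    using c by (intro mult_left_mono) auto
  also have "\<dots> \<le> up_mass q / 4"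
  proof -
    have "cbar eta * (2 * up_mass q) \<le> L * up_mass q"
      using L up_mass_nonneg[of q] mult_right_mono[of "2 * cbar eta" L "up_mass q"] by simp
    then show ?thesis using \<open>L > 0\<close> by (simp add: field_simps)
  qed
  finally show ?thesis .
qed

lemma typeII_linear:
  assumes eta: "eta > 0" "eta < 1" and q: "in_cube N q"
    and L: "L \<ge> 64 / eta" "L \<ge> 2 * cbar eta" and up: "up_mass q \<ge> L * (P_light + 1 / real n)"
  shows "Prob n N q (\<lambda>x. \<not> psi1 eta cI cA n N p t x) \<le> eta / 2"
proof -
  define D where "D = up_mass q"
  define m where "m = (\<Sum>i\<in>{A<..N}. q i - p i)"
  have n: "real n > 0" using n_pos by simp
  have "64 / eta \<ge> 64" using eta by (simp add: divide_simps)
  then have L64: "L \<ge> 64" using L by linarith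
  note large = up_mass_large[OF L64 up, folded D_def]
  have "D - P_light \<le> m" "m \<le> D"
    using light_shift_bounds[OF q] unfolding D_def m_def by simp_all
  then have m: "D / 2 \<le> m" "m \<le> D" using large(3) by linarith+
  have "(P_light + m) / real n \<le> 2 * D / real n"
    using large(3) m n by (intro divide_right_mono) auto
  then have var: "expect n N q (\<lambda>x. (T1 cI cA n N p t x - m)\<^sup>2) \<le> 2 * D / real n"
    using T1_var_le[OF q] unfolding m_def by linarith
  have "Prob n N q (\<lambda>x. \<not> psi1 eta cI cA n N p t x) \<le> Prob n N q (\<lambda>x. \<bar>T1 cI cA n N p t x - m\<bar> \<ge> D / 4)"
  proof (intro Prob_mono[OF q])
    fix x assume "\<not> psi1 eta cI cA n N p t x"
    then have "\<bar>T1 cI cA n N p t x\<bar> \<le> cbar eta * sqrt (P_light / real n)" by (simp add: psi1_iff not_less)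
    then show "\<bar>T1 cI cA n N p t x - m\<bar> \<ge> D / 4"
      using psi1_threshold_le[OF eta(1) L(2) up] m unfolding D_def by linarith
  qed
  also have "\<dots> \<le> (2 * D / real n) / (D / 4)\<^sup>2"
    using large(2) by (intro Prob_chebyshev_le[OF q _ var]) auto
  also have "\<dots> = 32 / (real n * D)" using large(2) n by (simp add: field_simps power2_eq_square)
  also have "\<dots> \<le> 32 / L" using large(1) L64 by (intro divide_left_mono) auto
  also have "\<dots> \<le> 32 / (64 / eta)" using L L64 eta by (intro divide_left_mono) auto
  finally show ?thesis by simp
qed

end

section \<open>Type II error: the light coordinates\<close>

context test_setting
begin

lemma sum_dist_up_down:
  "(\<Sum>i\<in>{A<..N}. \<bar>q i - p i\<bar> powr t) =
    (\<Sum>i\<in>up_set q. (q i - p i) powr t) + (\<Sum>i\<in>down_set q. \<bar>q i - p i\<bar> powr t)"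
  using sum_up_down[of "\<lambda>i. \<bar>q i - p i\<bar> powr t" q] unfolding up_set_def by simp

lemma down_dist_le:
  assumes q: "in_cube N q"
  shows "(\<Sum>i\<in>down_set q. \<bar>q i - p i\<bar> powr t) \<le> 2 * R powr t"
proof -
  have "(\<Sum>i\<in>down_set q. \<bar>q i - p i\<bar> powr t) \<le> (\<Sum>i\<in>down_set q. p i powr t)"
    using q t_range unfolding down_set_def in_cube_def by (intro sum_mono powr_mono2) auto
  also have "\<dots> \<le> (\<Sum>i\<in>{A<..N}. p i powr t)"
    unfolding down_set_def by (intro sum_mono2) auto
  also have "\<dots> \<le> 2 * R powr t" by (rule light_powr_t_le)
  finally show ?thesis .
qed

lemma up_dist_le_Holder:
  "(\<Sum>i\<in>up_set q. (q i - p i) powr t) \<le> up_mass q powr (2-t) * (\<Sum>i\<in>{A<..N}. (q i)\<^sup>2) powr (t-1)"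
proof -
  have "(\<Sum>i\<in>up_set q. (q i - p i) powr t) =
      (\<Sum>i\<in>up_set q. (q i - p i) powr (2-t) * ((q i - p i)\<^sup>2) powr (t-1))"
    unfolding up_set_def by (intro sum.cong refl) (simp add: power_powr powr_add[symmetric])
  also have "\<dots> \<le> (\<Sum>i\<in>up_set q. q i - p i) powr (2-t) * (\<Sum>i\<in>up_set q. (q i - p i)\<^sup>2) powr (t-1)"
    using t_range unfolding up_set_def by (intro sum_powr_Holder) auto
  also have "\<dots> \<le> up_mass q powr (2-t) * (\<Sum>i\<in>{A<..N}. (q i)\<^sup>2) powr (t-1)"
    unfolding up_mass_def
  proof (intro mult_left_mono powr_mono2)
    have "(\<Sum>i\<in>up_set q. (q i - p i)\<^sup>2) \<le> (\<Sum>i\<in>up_set q. (q i)\<^sup>2)"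
      using p_nonneg unfolding up_set_def by (intro sum_mono power_mono) auto
    also have "\<dots> \<le> (\<Sum>i\<in>{A<..N}. (q i)\<^sup>2)" unfolding up_set_def by (intro sum_mono2) auto
    finally show "(\<Sum>i\<in>up_set q. (q i - p i)\<^sup>2) \<le> (\<Sum>i\<in>{A<..N}. (q i)\<^sup>2)" .
  qed (use t_range in \<open>auto intro: sum_nonneg\<close>)
  finally show ?thesis .
qed

lemma light_null_mass_powr_le:
  assumes L: "L \<ge> 1"
  shows "(L * (P_light + 1 / real n)) powr (2-t) \<le>
    L * (2/cI + 2) * (T powr (2-t) + (1 / real n) powr (2-t))"
proof -
  define G where "G = 2/cI + 2"
  have e: "0 \<le> 2 - t" "2 - t \<le> 1" using t_range by auto
  have n: "real n > 0" using n_pos by simp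
  have "G \<ge> 1" unfolding G_def using cI by (simp add: add_increasing)
  then have LG: "L * G \<ge> 1" using L mult_mono[of 1 L 1 G] by simp
  have "P_light + 1 / real n \<le> G * (T + 1 / real n)"
    using light_mass_le T_nonneg unfolding P_light_def G_def by (simp add: algebra_simps)
  then have "(L * (P_light + 1 / real n)) powr (2-t) \<le> (L * G * (T + 1 / real n)) powr (2-t)"
    using L e P_light_nonneg n by (intro powr_mono2) (auto simp: mult.assoc)
  also have "\<dots> \<le> L * G * (T powr (2-t) + (1 / real n) powr (2-t))"
  proof -
    have "(L * G) powr (2-t) \<le> L * G" using LG e powr_mono[of "2-t" 1 "L * G"] by simp
    moreover have "(T + 1 / real n) powr (2-t) \<le> T powr (2-t) + (1 / real n) powr (2-t)"
      using T_nonneg n e by (intro powr_add_le_add_powr) auto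
    ultimately show ?thesis using LG by (simp add: powr_mult mult_mono)
  qed
  finally show ?thesis unfolding G_def .
qed

text \<open>By \<open>up_dist_le_Holder\<close>, this bounds the \<open>\<ell>\<^sub>t\<close> distance that the light coordinates can
  carry when \<open>q\<close> adds less than \<open>L (P_light + 1/n)\<close> mass and has \<open>\<ell>\<^sub>2\<close> mass below \<open>4 K0 / n\<^sup>2\<close>.\<close>

lemma light_budget_le:
  assumes K0: "K0 \<ge> 1" and L: "L \<ge> 1"
  shows "(L * (P_light + 1 / real n)) powr (2-t) * (4 * K0 / (real n)\<^sup>2) powr (t-1)
    \<le> 8 * L * (2/cI + 2) * K0 * R powr t"
proof -
  have n: "real n > 0" using n_pos by simp
  have G: "L * (2/cI + 2) \<ge> 0" using L cI by simp
  have Y: "(4 * K0 / (real n)\<^sup>2) powr (t-1) = (4 * K0) powr (t-1) * real n powr (2 - 2*t)"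
  proof -
    have "(4 * K0 / (real n)\<^sup>2) powr (t-1) = (4 * K0) powr (t-1) / real n powr (2 * (t-1))"
      using n by (simp add: powr_divide power_powr)
    moreover have "real n powr (2 - 2*t) = inverse (real n powr (2 * (t-1)))"
      by (simp add: powr_minus[symmetric] algebra_simps)
    ultimately show ?thesis by (simp add: divide_inverse)
  qed
  have K4: "(4 * K0) powr (t-1) \<le> 4 * K0" using K0 t_range powr_mono[of "t-1" 1 "4 * K0"] by simp
  have "(L * (P_light + 1 / real n)) powr (2-t) * (4 * K0 / (real n)\<^sup>2) powr (t-1) \<le>
      L * (2/cI + 2) * (T powr (2-t) + (1 / real n) powr (2-t)) * ((4 * K0) powr (t-1) * real n powr (2 - 2*t))"
    unfolding Y using light_null_mass_powr_le[OF L] by (intro mult_right_mono) auto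
  also have "\<dots> = L * (2/cI + 2) * (4 * K0) powr (t-1) *
      (T powr (2-t) * real n powr (2 - 2*t) + (1 / real n) powr (2-t) * real n powr (2 - 2*t))"
    by (simp add: algebra_simps)
  also have "\<dots> \<le> L * (2/cI + 2) * (4 * K0) * (R powr t + R powr t)"
    using K4 tail_budget_le inv_n_budget_le G K0 by (intro mult_mono add_mono mult_left_mono) auto
  finally show ?thesis by simp
qed

lemma up_dist_ge:
  assumes q: "in_cube N q" and C: "C > 0" "C powr t \<ge> 8"
    and dist: "(\<Sum>i\<in>{A<..N}. \<bar>q i - p i\<bar> powr t) \<ge> (C * R) powr t / 2"
  shows "(\<Sum>i\<in>up_set q. (q i - p i) powr t) \<ge> C powr t * R powr t / 4"
proof -
  have "C powr t * R powr t \<ge> 8 * R powr t" using C by (intro mult_right_mono) auto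
  moreover have "(C * R) powr t = C powr t * R powr t" using C R_pos by (simp add: powr_mult)
  ultimately show ?thesis using dist down_dist_le[OF q] sum_dist_up_down[of q] by linarith
qed

lemma typeII_light_up_mass:
  assumes q: "in_cube N q" and K0: "K0 \<ge> 1" and L: "L \<ge> 1"
    and C: "C > 32 * L * (2/cI + 2) * K0"
    and dist: "(\<Sum>i\<in>{A<..N}. \<bar>q i - p i\<bar> powr t) \<ge> (C * R) powr t / 2"
    and sq: "(\<Sum>i\<in>{A<..N}. (q i)\<^sup>2) < 4 * K0 / (real n)\<^sup>2"
  shows "up_mass q \<ge> L * (P_light + 1 / real n)"
proof -
  define W where "W = L * (P_light + 1 / real n)"
  define Y where "Y = (4 * K0 / (real n)\<^sup>2) powr (t-1)"
  have Y: "Y > 0" unfolding Y_def using K0 n_pos by simp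
  have "1 * 1 * 1 \<le> L * (2/cI + 2) * K0" using L K0 cI by (intro mult_mono) (auto simp: add_increasing)
  then have "32 * L * (2/cI + 2) * K0 \<ge> 32" by simp
  then have Ct: "C powr t \<ge> C" "C \<ge> 32" using C t_range powr_mono[of 1 t C] by auto
  have "W powr (2-t) * Y \<le> 8 * L * (2/cI + 2) * K0 * R powr t"
    unfolding W_def Y_def by (rule light_budget_le[OF K0 L])
  also have "\<dots> < C powr t / 4 * R powr t"
    using C Ct R_pos by (intro mult_strict_right_mono) auto
  also have "\<dots> \<le> (\<Sum>i\<in>up_set q. (q i - p i) powr t)"
    using up_dist_ge[OF q _ _ dist] Ct by simp
  also have "\<dots> \<le> up_mass q powr (2-t) * Y"
  proof -
    have "(\<Sum>i\<in>{A<..N}. (q i)\<^sup>2) powr (t-1) \<le> (4 * K0 / (real n)\<^sup>2) powr (t-1)"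
      using sq t_range by (intro powr_mono2) (auto intro: sum_nonneg)
    then show ?thesis
      unfolding Y_def using up_dist_le_Holder[of q] by (meson mult_left_mono powr_ge_zero order_trans)
  qed
  finally have less: "W powr (2-t) * Y < up_mass q powr (2-t) * Y" .
  show ?thesis
  proof (rule ccontr)
    assume "\<not> up_mass q \<ge> L * (P_light + 1 / real n)"
    then have "up_mass q powr (2-t) \<le> W powr (2-t)"
      using t_range up_mass_nonneg unfolding W_def by (intro powr_mono2) auto
    then show False using less Y by (simp add: mult_le_cancel_right_pos)
  qed
qed

end

section \<open>The separation rate of the combined test\<close>

definition C_sep :: "real \<Rightarrow> real \<Rightarrow> real \<Rightarrow> real" where
  "C_sep eta cI cA = 8 + 8 * cbar eta + 384 / (eta * cA\<^sup>2)
     + 32 * (64/eta + 2 * cbar eta) * (2/cI + 2) * (36 / eta\<^sup>2)"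

lemma C_sep_ge:
  assumes eta: "0 < eta" "eta < 1" and c: "0 < cI" "0 < cA"
  defines "C \<equiv> C_sep eta cI cA"
  shows "C \<ge> 2" "C\<^sup>2 \<ge> 8 * cbar eta" "C * (eta * cA\<^sup>2) \<ge> 384"
    and "C > 32 * (64/eta + 2 * cbar eta) * (2/cI + 2) * (36 / eta\<^sup>2)"
proof -
  have nonneg: "8 * cbar eta \<ge> 0" "384 / (eta * cA\<^sup>2) \<ge> 0"
    "32 * (64/eta + 2 * cbar eta) * (2/cI + 2) * (36 / eta\<^sup>2) \<ge> 0"
    using cbar_pos[OF eta(1)] eta c by auto
  then have C8: "C \<ge> 8" unfolding C_def C_sep_def by linarith
  then show "C \<ge> 2" by simp
  have "C \<ge> 8 * cbar eta" using nonneg unfolding C_def C_sep_def by linarith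
  moreover have "C \<le> C\<^sup>2" using C8 by (simp add: power2_eq_square)
  ultimately show "C\<^sup>2 \<ge> 8 * cbar eta" by linarith
  have "C \<ge> 384 / (eta * cA\<^sup>2)" using nonneg unfolding C_def C_sep_def by linarith
  then show "C * (eta * cA\<^sup>2) \<ge> 384" using eta c by (simp add: divide_simps mult.commute)
  show "C > 32 * (64/eta + 2 * cbar eta) * (2/cI + 2) * (36 / eta\<^sup>2)"
    using nonneg unfolding C_def C_sep_def by linarith
qed

context test_setting
begin

lemma dist_powr_t_ge:
  assumes "\<rho> > 0" "lnorm_on t (\<lambda>j. p j - q j) {1..N} \<ge> \<rho>"
  shows "(\<Sum>j\<in>{1..A}. \<bar>q j - p j\<bar> powr t) + (\<Sum>j\<in>{A<..N}. \<bar>q j - p j\<bar> powr t) \<ge> \<rho> powr t"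
proof -
  define Sig where "Sig = (\<Sum>j\<in>{1..N}. \<bar>q j - p j\<bar> powr t)"
  have Sig0: "Sig \<ge> 0" unfolding Sig_def by (intro sum_nonneg) auto
  have "\<rho> powr t \<le> (Sig powr (1/t)) powr t"
    using assms t_range unfolding lnorm_on_def Sig_def by (intro powr_mono2) (auto simp: abs_minus_commute)
  also have "\<dots> = Sig" using t_range Sig0 by (simp add: powr_powr)
  also have "{1..N} = {1..A} \<union> {A<..N}" using A_le_N by auto
  then have "Sig = (\<Sum>j\<in>{1..A}. \<bar>q j - p j\<bar> powr t) + (\<Sum>j\<in>{A<..N}. \<bar>q j - p j\<bar> powr t)"
    unfolding Sig_def by (simp only:) (rule sum.union_disjoint, auto)
  finally show ?thesis .
qed

lemma typeII_bulk:
  assumes eta: "0 < eta" "eta < 1" and q: "in_cube N q"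
    and dist: "(\<Sum>j\<in>{1..A}. \<bar>q j - p j\<bar> powr t) \<ge> (C_sep eta cI cA * R) powr t / 2"
  shows "Prob n N q (\<lambda>x. \<not> test eta cI cA n N p t x) \<le> eta / 2"
proof -
  note C = C_sep_ge[OF eta cI(1) cA(1)]
  have "(C_sep eta cI cA * R) powr t > 0" using C(1) R_pos by simp
  then have A1: "A \<ge> 1" using dist by (cases A) auto
  have "Prob n N q (\<lambda>x. \<not> test eta cI cA n N p t x) \<le> Prob n N q (\<lambda>x. \<not> psi_bulk eta cI cA n N p t x)"
    using q by (intro Prob_mono) (auto simp: test_def)
  also have "\<dots> \<le> eta / 2"
    using C(1) by (intro typeII_bulk_core[OF eta(1) q A1 C(1-3)] bulk_signal_ge[OF _ A1 dist]) simp
  finally show ?thesis .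
qed

lemma typeII_light:
  assumes eta: "0 < eta" "eta < 1" and q: "in_cube N q"
    and dist: "(\<Sum>j\<in>{A<..N}. \<bar>q j - p j\<bar> powr t) \<ge> (C_sep eta cI cA * R) powr t / 2"
  shows "Prob n N q (\<lambda>x. \<not> test eta cI cA n N p t x) \<le> eta / 2"
proof (cases "collision_mean q \<ge> 36 / eta\<^sup>2")
  case True
  have "Prob n N q (\<lambda>x. \<not> test eta cI cA n N p t x) \<le> Prob n N q (\<lambda>x. \<not> psi2 cI cA n N p t x)"
    using q by (intro Prob_mono) (auto simp: test_def)
  also have "\<dots> \<le> eta / 2" by (rule typeII_collision[OF eta q True])
  finally show ?thesis .
next
  case False
  define K0 where "K0 = 36 / eta\<^sup>2"
  define L where "L = 64/eta + 2 * cbar eta"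
  have "eta\<^sup>2 \<le> 1" using eta by (simp add: power_le_one)
  then have K0: "K0 \<ge> 1" unfolding K0_def using eta by (simp add: divide_simps)
  have "64 / eta \<ge> 1" using eta by (simp add: divide_simps)
  then have L: "L \<ge> 64 / eta" "L \<ge> 2 * cbar eta" "L \<ge> 1"
    unfolding L_def using cbar_pos[OF eta(1)] by linarith+
  have "(real k)\<^sup>2 * (\<Sum>j\<in>{A<..N}. (q j)\<^sup>2) < K0"
    using False unfolding collision_mean_def K0_def by (simp add: sum_distrib_left)
  then have "(\<Sum>j\<in>{A<..N}. (q j)\<^sup>2) < 4 * K0 / (real n)\<^sup>2"
    using k_pos n_eq by (simp add: field_simps power2_eq_square)
  then have up: "up_mass q \<ge> L * (P_light + 1 / real n)"
    using typeII_light_up_mass[OF q K0 L(3) _ dist] C_sep_ge(4)[OF eta cI(1) cA(1)]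
    unfolding L_def K0_def by simp
  have "Prob n N q (\<lambda>x. \<not> test eta cI cA n N p t x) \<le> Prob n N q (\<lambda>x. \<not> psi1 eta cI cA n N p t x)"
    using q by (intro Prob_mono) (auto simp: test_def)
  also have "\<dots> \<le> eta / 2" by (rule typeII_linear[OF eta q L(1,2) up])
  finally show ?thesis .
qed

lemma typeII:
  assumes eta: "0 < eta" "eta < 1" and q: "in_cube N q"
    and dist: "lnorm_on t (\<lambda>j. p j - q j) {1..N} \<ge> C_sep eta cI cA * R"
  shows "Prob n N q (\<lambda>x. \<not> test eta cI cA n N p t x) \<le> eta / 2"
proof -
  have "C_sep eta cI cA * R > 0" using C_sep_ge(1)[OF eta cI(1) cA(1)] R_pos by simp
  from dist_powr_t_ge[OF this dist]
  consider "(\<Sum>j\<in>{1..A}. \<bar>q j - p j\<bar> powr t) \<ge> (C_sep eta cI cA * R) powr t / 2"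
    | "(\<Sum>j\<in>{A<..N}. \<bar>q j - p j\<bar> powr t) \<ge> (C_sep eta cI cA * R) powr t / 2"
    by linarith
  then show ?thesis using typeII_bulk[OF eta q] typeII_light[OF eta q] by cases
qed

end

lemma rho_star_le:
  assumes "\<rho> > 0" and typeI: "Prob n N p \<psi> \<le> eta / 2"
    and typeII: "\<And>q. in_cube N q \<Longrightarrow> lnorm_on t (\<lambda>j. p j - q j) {1..N} \<ge> \<rho> \<Longrightarrow>
      Prob n N q (\<lambda>x. \<not> \<psi> x) \<le> eta / 2"
  shows "rho_star n N p t eta \<le> \<rho>"
  unfolding rho_star_def
proof (rule cInf_lower)
  show "\<rho> \<in> {\<rho>. \<rho> > 0 \<and> (\<exists>\<psi>. \<forall>q. in_cube N q \<and> lnorm_on t (\<lambda>j. p j - q j) {1..N} \<ge> \<rho> \<longrightarrow>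
      Prob n N p \<psi> + Prob n N q (\<lambda>x. \<not> \<psi> x) \<le> eta)}"
  proof (intro CollectI conjI exI allI impI)
    fix q assume "in_cube N q \<and> lnorm_on t (\<lambda>j. p j - q j) {1..N} \<ge> \<rho>"
    then show "Prob n N p \<psi> + Prob n N q (\<lambda>x. \<not> \<psi> x) \<le> eta" using typeI typeII[of q] by simp
  qed (rule \<open>\<rho> > 0\<close>)
qed (auto intro: bdd_belowI[where m=0])

theorem theorem3:
  fixes eta :: real
  assumes "0 < eta" and "eta < 1"
  shows "\<exists>c0>0. \<forall>cI cA. 0 < cI \<and> cI \<le> c0 \<and> 0 < cA \<and> cA \<le> c0 \<longrightarrow>
    (\<forall>t::real. 1 \<le> t \<and> t \<le> 2 \<longrightarrow>
      (\<exists>C'>0. \<forall>(N::nat) (n::nat) (p::nat \<Rightarrow> real).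
         2 \<le> N \<and> 2 \<le> n \<and> even n
         \<and> (\<forall>i j. 1 \<le> i \<and> i \<le> j \<and> j \<le> N \<longrightarrow> p j \<le> p i)
         \<and> (\<forall>j\<in>{1..N}. 0 \<le> p j \<and> p j \<le> 1/2)
         \<longrightarrow>
           Prob n N p (test eta cI cA n N p t) \<le> eta / 2
         \<and> (\<forall>q. in_cube N q \<and> lnorm_on t (\<lambda>j. p j - q j) {1..N} \<ge> C' * rate cI n N p t
                \<longrightarrow> Prob n N q (\<lambda>x. \<not> test eta cI cA n N p t x) \<le> eta / 2)
         \<and> rho_star n N p t eta \<le> C' * rate cI n N p t))"
proof (rule exI[of _ "eta/8"], intro conjI allI impI)
  fix cI cA t :: real
  assume c: "0 < cI \<and> cI \<le> eta / 8 \<and> 0 < cA \<and> cA \<le> eta / 8" and t: "1 \<le> t \<and> t \<le> 2"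
  show "\<exists>C'>0. \<forall>N n p. 2 \<le> N \<and> 2 \<le> n \<and> even n \<and> (\<forall>i j. 1 \<le> i \<and> i \<le> j \<and> j \<le> N \<longrightarrow> p j \<le> p i)
      \<and> (\<forall>j\<in>{1..N}. 0 \<le> p j \<and> p j \<le> 1/2) \<longrightarrow>
      Prob n N p (test eta cI cA n N p t) \<le> eta / 2
      \<and> (\<forall>q. in_cube N q \<and> lnorm_on t (\<lambda>j. p j - q j) {1..N} \<ge> C' * rate cI n N p t
          \<longrightarrow> Prob n N q (\<lambda>x. \<not> test eta cI cA n N p t x) \<le> eta / 2)
      \<and> rho_star n N p t eta \<le> C' * rate cI n N p t"
  proof (rule exI[of _ "C_sep eta cI cA"], intro conjI allI impI)
    show "C_sep eta cI cA > 0" using C_sep_ge(1)[of eta cI cA] assms c by simp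
    fix N n :: nat and p :: "nat \<Rightarrow> real"
    assume H: "2 \<le> N \<and> 2 \<le> n \<and> even n \<and> (\<forall>i j. 1 \<le> i \<and> i \<le> j \<and> j \<le> N \<longrightarrow> p j \<le> p i)
      \<and> (\<forall>j\<in>{1..N}. 0 \<le> p j \<and> p j \<le> 1/2)"
    then obtain k where "n = 2 * k" by (auto elim: evenE)
    then interpret test_setting N n k p t cI cA
      using H t c assms by unfold_locales auto
    show typeI: "Prob n N p (test eta cI cA n N p t) \<le> eta / 2"
      using typeI assms c by simp
    show typeII: "Prob n N q (\<lambda>x. \<not> test eta cI cA n N p t x) \<le> eta / 2"
      if "in_cube N q \<and> lnorm_on t (\<lambda>j. p j - q j) {1..N} \<ge> C_sep eta cI cA * rate cI n N p t" for q
      using typeII assms that unfolding rate_eq by blast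
    show "rho_star n N p t eta \<le> C_sep eta cI cA * rate cI n N p t"
      using rho_star_le[OF _ typeI] typeII C_sep_ge(1)[of eta cI cA] R_pos assms c
      unfolding rate_eq by simp
  qed
qed (use assms in simp)

end
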